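(* For every integer $n \geq 3$: \begin{align*} f_{(n,3,3),2} &= q^9 \begin{bmatrix} n-1 \\ 2 \end{bmatrix}_q, \\ f_{(n,3,3),3} &= q^{11} \begin{bmatrix} n-1 \\ 2 \end{bmatrix}_q \begin{bmatrix} n+3 \\ 1 \end{bmatrix}_q + q^{12} \begin{bmatrix} n \\ 3 \end{bmatrix}_q \begin{bmatrix} 4 \\ 1 \end{bmatrix}_q, \\ f_{(n,3,3),4} &= q^{15} \begin{bmatrix} n-1 \\ 2 \end{bmatrix}_q \begin{bmatrix} n+2 \\ 2 \end{bmatrix}_q + q^{15} \begin{bmatrix} n+1 \\ 4 \end{bmatrix}_q \begin{bmatrix} 5 \\ 2 \end{bmatrix}_q, \\ f_{(n,3,3),5} &= q^{21} \begin{bmatrix} n-1 \\ 2 \end{bmatrix}_q \begin{bmatrix} n+1 \\ 3 \end{bmatrix}_q + q^{20} \begin{bmatrix} n+1 \\ 4 \end{bmatrix}_q \begin{bmatrix} n+3 \\ 1 \end{bmatrix}_q, \\ f_{(n,3,3),6} &= q^{27} \frac{(1-q^{n-2})(1-q^{n-1})^2 (1-q^n)^2(1-q^{n+1})}{(1-q)(1-q^2)^2(1-q^3)^2 (1-q^4)} = q^{27} \begin{bmatrix} n \\ 3 \end{bmatrix}_q^2 - q^{28} \begin{bmatrix} n \\ 4 \end{bmatrix}_q \begin{bmatrix} n \\ 2 \end{bmatrix}_q. \end{align*}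
   Context: For a partition $\lambda\vdash N$, a standard Young tableau of shape $\lambda$ is a filling of the Ferrers diagram with $1,\dots,N$, increasing along rows and down columns; it has a descent at $m$ if $m+1$ lies in a strictly lower row than $m$; $\mathrm{des}$ is the number of descents and $\mathrm{maj}$ their sum. $f_{\lambda,i}(q)=\sum q^{\mathrm{maj}(\tau)}$ over standard Young tableaux of shape $\lambda$ with $\mathrm{des}(\tau)=i$. The $q$-binomial coefficient is $\frac{(q)_M}{(q)_N(q)_{M-N}}$, $(q)_m=(1-q)\cdots(1-q^m)$, for integers $0\le N\le M$, and $0$ otherwise. *)

theory Defs
  imports "HOL-Computational_Algebra.Polynomial"
begin

definition qvar :: "int poly" where "qvar = [:0, 1:]"

definition qpoch :: "nat \<Rightarrow> int poly" where
  "qpoch m = (\<Prod>i\<in>{1..m}. 1 - qvar ^ i)"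

text \<open>q-binomial coefficient (exact polynomial division); 0 unless 0 <= N <= M (integers).\<close>
definition qbinom :: "int \<Rightarrow> int \<Rightarrow> int poly" where
  "qbinom M N = (if 0 \<le> N \<and> N \<le> M
      then qpoch (nat M) div (qpoch (nat N) * qpoch (nat (M - N))) else 0)"

definition is_partition :: "nat list \<Rightarrow> bool" where
  "is_partition lam \<longleftrightarrow> sorted_wrt (\<ge>) lam \<and> (\<forall>x\<in>set lam. 0 < x)"

definition cells :: "nat list \<Rightarrow> (nat \<times> nat) set" where
  "cells lam = {(i, j). i < length lam \<and> j < lam ! i}"

definition syt :: "nat list \<Rightarrow> (nat \<times> nat \<Rightarrow> nat) \<Rightarrow> bool" where
  "syt lam T \<longleftrightarrow>
     bij_betw T (cells lam) {1..sum_list lam} \<and>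
     (\<forall>i j. (i, j) \<in> cells lam \<and> (i, Suc j) \<in> cells lam \<longrightarrow> T (i, j) < T (i, Suc j)) \<and>
     (\<forall>i j. (i, j) \<in> cells lam \<and> (Suc i, j) \<in> cells lam \<longrightarrow> T (i, j) < T (Suc i, j)) \<and>
     (\<forall>c. c \<notin> cells lam \<longrightarrow> T c = 0)"

definition row_of :: "nat list \<Rightarrow> (nat \<times> nat \<Rightarrow> nat) \<Rightarrow> nat \<Rightarrow> nat" where
  "row_of lam T m = fst (inv_into (cells lam) T m)"

definition descents :: "nat list \<Rightarrow> (nat \<times> nat \<Rightarrow> nat) \<Rightarrow> nat set" where
  "descents lam T = {m. 1 \<le> m \<and> m < sum_list lam \<and> row_of lam T m < row_of lam T (Suc m)}"

definition des :: "nat list \<Rightarrow> (nat \<times> nat \<Rightarrow> nat) \<Rightarrow> nat" where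
  "des lam T = card (descents lam T)"

definition maj :: "nat list \<Rightarrow> (nat \<times> nat \<Rightarrow> nat) \<Rightarrow> nat" where
  "maj lam T = \<Sum>(descents lam T)"

definition f_poly :: "nat list \<Rightarrow> nat \<Rightarrow> int poly" where
  "f_poly lam i = (\<Sum>T\<in>{T. syt lam T \<and> des lam T = i}. qvar ^ maj lam T)"

end

theory Submission
  imports Defs
begin

text \<open>Reading a standard Young tableau row by row gives its Yamanouchi word, and the descents of
  the tableau are the ascents of that word. So f_{(n,3,3),i} is the major index generating function
  of lattice words with n letters 0, three letters 1 and three letters 2 and with i ascents, which
  satisfies a recursion by deletion of the last letter. For fixed numbers b, c \<le> 3 of letters 1 and 2,
  (q)_4 (q)_3 times this generating function is a polynomial in Y = q^a (a the number of letters 0)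
  with coefficients in Z[q]. A table of these polynomials is verified against the recursion by
  evaluation, which identifies it with the generating functions by induction on the length. Both
  sides of each identity are then compared as polynomials in Y = q^(n-3).\<close>

section \<open>q-binomial coefficients\<close>

lemma qpoch_0 [simp]: "qpoch 0 = 1"
  by (simp add: qpoch_def)

lemma qpoch_Suc: "qpoch (Suc m) = qpoch m * (1 - qvar ^ Suc m)"
  by (simp add: qpoch_def atLeastAtMostSuc_conv mult.commute)

lemma one_minus_qvar_power_nonzero: "j \<ge> 1 \<Longrightarrow> 1 - qvar ^ j \<noteq> 0"
proof
  assume j: "j \<ge> 1" and "1 - qvar ^ j = 0"
  then have "poly (1 - qvar ^ j) (2::int) = 0" by simp
  then have "(2::int) ^ j = 1" by (simp add: qvar_def)
  moreover have "(2::int) ^ 1 \<le> 2 ^ j" by (rule power_increasing) (use j in auto)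
  ultimately show False by simp
qed

lemma qpoch_nonzero: "qpoch m \<noteq> 0"
  unfolding qpoch_def using one_minus_qvar_power_nonzero by (simp add: prod_zero_iff)

lemma qpoch_eq_mult_prod: "N \<le> M \<Longrightarrow> qpoch M = qpoch (M - N) * (\<Prod>t<N. 1 - qvar ^ (M - t))"
proof (induction N)
  case (Suc N)
  have e: "M - N = Suc (M - Suc N)" using Suc.prems by simp
  have "qpoch M = qpoch (M - N) * (\<Prod>t<N. 1 - qvar ^ (M - t))" using Suc by simp
  also have "qpoch (M - N) = qpoch (M - Suc N) * (1 - qvar ^ (M - N))"
    by (subst (1 2) e) (simp only: qpoch_Suc)
  finally show ?case by (simp add: mult_ac)
qed simp

text \<open>The q-Pascal recursion; it shows that the quotient in the definition of qbinom is exact.\<close>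

fun gauss_poly :: "nat \<Rightarrow> nat \<Rightarrow> int poly" where
  "gauss_poly m 0 = 1"
| "gauss_poly 0 (Suc k) = 0"
| "gauss_poly (Suc m) (Suc k) = gauss_poly m k + qvar ^ Suc k * gauss_poly m (Suc k)"

lemma gauss_poly_eq_0: "m < k \<Longrightarrow> gauss_poly m k = 0"
  by (induction m k rule: gauss_poly.induct) auto

lemma gauss_poly_mult_qpoch: "k \<le> m \<Longrightarrow> gauss_poly m k * qpoch k * qpoch (m - k) = qpoch m"
proof (induction m arbitrary: k)
  case (Suc m)
  show ?case
  proof (cases k)
    case (Suc k')
    show ?thesis
    proof (cases "k' = m")
      case True
      have "gauss_poly m m * qpoch m = qpoch m" using Suc.IH[of m] by simp
      then show ?thesis using True Suc gauss_poly_eq_0[of m "Suc m"] qpoch_nonzero[of m] by simp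
    next
      case False
      then have lt: "k' < m" using Suc.prems Suc by simp
      have qe: "qpoch (m - k') = qpoch (m - Suc k') * (1 - qvar ^ (m - k'))"
        using lt qpoch_Suc[of "m - Suc k'"] by (simp add: Suc_diff_Suc)
      have IH1: "gauss_poly m k' * qpoch k' * qpoch (m - k') = qpoch m"
        using Suc.IH lt by simp
      have IH2: "gauss_poly m (Suc k') * qpoch (Suc k') * qpoch (m - Suc k') = qpoch m"
        using Suc.IH lt by simp
      have pw: "qvar ^ Suc k' * qvar ^ (m - k') = qvar ^ Suc m"
        using lt by (simp add: power_add[symmetric])
      have "gauss_poly (Suc m) k * qpoch k * qpoch (Suc m - k)
          = (gauss_poly m k' + qvar ^ Suc k' * gauss_poly m (Suc k')) * (qpoch k' * (1 - qvar ^ Suc k')) * qpoch (m - k')"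
        using Suc by (simp add: qpoch_Suc)
      also have "\<dots> = (gauss_poly m k' * qpoch k' * qpoch (m - k')) * (1 - qvar ^ Suc k')
          + qvar ^ Suc k' * (gauss_poly m (Suc k') * (qpoch k' * (1 - qvar ^ Suc k')) * qpoch (m - Suc k')) * (1 - qvar ^ (m - k'))"
        unfolding qe by (simp add: algebra_simps)
      also have "\<dots> = qpoch m * (1 - qvar ^ Suc k') + qvar ^ Suc k' * qpoch m * (1 - qvar ^ (m - k'))"
        using IH1 IH2 by (simp add: qpoch_Suc mult.assoc)
      also have "\<dots> = qpoch (Suc m)"
        unfolding qpoch_Suc pw[symmetric] by (simp add: algebra_simps)
      finally show ?thesis .
    qed
  qed simp
qed simp

lemma qbinom_eq_gauss_poly:
  assumes "N \<le> M" shows "qbinom (int M) (int N) = gauss_poly M N"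
proof -
  have "qpoch M = gauss_poly M N * (qpoch N * qpoch (M - N))"
    using gauss_poly_mult_qpoch[OF assms] by (simp add: mult.assoc)
  moreover have "nat (int M - int N) = M - N" using assms by simp
  ultimately show ?thesis using assms qpoch_nonzero by (simp add: qbinom_def del: of_nat_diff)
qed

lemma qbinom_mult_qpoch: "qbinom (int M) (int N) * qpoch N = (\<Prod>t<N. 1 - qvar ^ (M - t))"
proof (cases "N \<le> M")
  case True
  have "gauss_poly M N * qpoch N * qpoch (M - N) = qpoch (M - N) * (\<Prod>t<N. 1 - qvar ^ (M - t))"
    using gauss_poly_mult_qpoch[OF True] qpoch_eq_mult_prod[OF True] by simp
  then show ?thesis
    using qbinom_eq_gauss_poly[OF True] qpoch_nonzero[of "M - N"] by (simp add: mult.commute)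
next
  case False
  then have "(\<Prod>t<N. 1 - qvar ^ (M - t)) = (0 :: int poly)"
    by (subst prod_zero_iff) (auto intro!: bexI[of _ M])
  then show ?thesis using False by (simp add: qbinom_def)
qed

section \<open>Tableaux and Yamanouchi words\<close>

definition lattice_word :: "nat \<Rightarrow> nat list \<Rightarrow> bool" where
  "lattice_word L w \<longleftrightarrow>
     (\<forall>k \<le> length w. \<forall>i. Suc i < L \<longrightarrow> count_list (take k w) (Suc i) \<le> count_list (take k w) i)"

definition yamanouchi :: "nat list \<Rightarrow> nat list set" where
  "yamanouchi lam = {w. (\<forall>x\<in>set w. x < length lam) \<and> (\<forall>i<length lam. count_list w i = lam ! i)
                        \<and> lattice_word (length lam) w}"

text \<open>Indexed like descents: m is a descent when the m-th letter (counting from 1) is smaller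
  than the next one.\<close>

definition word_descents :: "nat list \<Rightarrow> nat set" where
  "word_descents w = {m. 1 \<le> m \<and> m < length w \<and> w ! (m - 1) < w ! m}"

definition row_word :: "nat list \<Rightarrow> (nat \<times> nat \<Rightarrow> nat) \<Rightarrow> nat list" where
  "row_word lam T = map (row_of lam T) [1..<Suc (sum_list lam)]"

lemma is_partition_nth_Suc_le: "is_partition lam \<Longrightarrow> Suc i < length lam \<Longrightarrow> lam ! Suc i \<le> lam ! i"
  unfolding is_partition_def using sorted_wrt_nth_less[of "\<lambda>x y. y \<le> x" lam i "Suc i"] by auto

lemma count_list_map_upt: "count_list (map f [a..<b]) x = card {m \<in> {a..<b}. f m = x}"
proof -
  have "count_list (map f [a..<b]) x = length (filter (\<lambda>m. x = f m) [a..<b])"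
    by (simp add: count_list_eq_length_filter filter_map comp_def)
  also have "\<dots> = card (set (filter (\<lambda>m. x = f m) [a..<b]))"
    by (rule distinct_card[symmetric]) simp
  also have "set (filter (\<lambda>m. x = f m) [a..<b]) = {m \<in> {a..<b}. f m = x}" by auto
  finally show ?thesis .
qed

lemma count_list_take_le: "count_list (take k xs) x \<le> count_list xs x"
  by (metis append_take_drop_id count_list_append le_add1)

lemma length_yamanouchi: "w \<in> yamanouchi lam \<Longrightarrow> length w = sum_list lam"
proof -
  assume w: "w \<in> yamanouchi lam"
  have "length w = sum (count_list w) {..<length lam}"
    using w by (intro sum_count_set[symmetric]) (auto simp: yamanouchi_def)
  also have "\<dots> = (\<Sum>i<length lam. lam ! i)"
    using w by (intro sum.cong) (auto simp: yamanouchi_def)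
  also have "\<dots> = sum_list lam" by (simp add: sum_list_sum_nth atLeast0LessThan)
  finally show ?thesis .
qed

lemma finite_yamanouchi: "finite (yamanouchi lam)"
proof (rule finite_subset)
  show "yamanouchi lam \<subseteq> {w. set w \<subseteq> {..<length lam} \<and> length w = sum_list lam}"
  proof
    fix w assume w: "w \<in> yamanouchi lam"
    then have "set w \<subseteq> {..<length lam}" unfolding yamanouchi_def by blast
    then show "w \<in> {w. set w \<subseteq> {..<length lam} \<and> length w = sum_list lam}"
      using length_yamanouchi[OF w] by blast
  qed
  show "finite {w. set w \<subseteq> {..<length lam} \<and> length w = sum_list lam}"
    by (rule finite_lists_length_eq) (rule finite_lessThan)
qed

context
  fixes lam :: "nat list" and T :: "nat \<times> nat \<Rightarrow> nat"
  assumes syt: "syt lam T"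
begin

lemma syt_image: "T ` cells lam = {1..sum_list lam}"
  using syt by (simp add: syt_def bij_betw_def)

lemma syt_inj: "inj_on T (cells lam)"
  using syt by (simp add: syt_def bij_betw_def)

lemma syt_entry_range: "c \<in> cells lam \<Longrightarrow> T c \<in> {1..sum_list lam}"
  using syt_image by blast

lemma syt_inv_into_cell: "m \<in> {1..sum_list lam} \<Longrightarrow> inv_into (cells lam) T m \<in> cells lam"
  using syt_image by (metis inv_into_into)

lemma syt_entry_inv_into: "m \<in> {1..sum_list lam} \<Longrightarrow> T (inv_into (cells lam) T m) = m"
  using syt_image by (metis f_inv_into_f)

lemma syt_row_of_entry: "(i, j) \<in> cells lam \<Longrightarrow> row_of lam T (T (i, j)) = i"
  using syt_inj by (simp add: row_of_def inv_into_f_f)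

lemma syt_row_of_less: "m \<in> {1..sum_list lam} \<Longrightarrow> row_of lam T m < length lam"
  using syt_inv_into_cell[of m] by (auto simp: row_of_def cells_def split: prod.splits)

lemma syt_cell_of_row:
  assumes "m \<in> {1..sum_list lam}" "row_of lam T m = i"
  obtains j where "(i, j) \<in> cells lam" "T (i, j) = m"
proof -
  obtain i' j where c: "inv_into (cells lam) T m = (i', j)" by fastforce
  have "(i', j) \<in> cells lam" using syt_inv_into_cell[OF assms(1)] c by simp
  moreover have "i' = i" using assms(2) c by (simp add: row_of_def)
  moreover have "T (i', j) = m" using syt_entry_inv_into[OF assms(1)] c by simp
  ultimately show ?thesis using that by blast
qed

lemma syt_row_strict: "(i, j) \<in> cells lam \<Longrightarrow> j' < j \<Longrightarrow> T (i, j') < T (i, j)"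
proof (induction j arbitrary: j')
  case (Suc k)
  have k: "(i, k) \<in> cells lam" using Suc.prems by (auto simp: cells_def)
  have step: "T (i, k) < T (i, Suc k)" using syt Suc.prems k by (auto simp: syt_def)
  show ?case
  proof (cases "j' = k")
    case False
    then show ?thesis using Suc.IH[OF k, of j'] Suc.prems step by simp
  qed (use step in simp)
qed simp

lemma syt_row_prefix:
  assumes ij: "(i, j) \<in> cells lam"
  shows "{m \<in> {1..sum_list lam}. row_of lam T m = i \<and> m < T (i, j)} = T ` ({i} \<times> {..<j})"
proof
  show "T ` ({i} \<times> {..<j}) \<subseteq> {m \<in> {1..sum_list lam}. row_of lam T m = i \<and> m < T (i, j)}"
  proof
    fix m assume "m \<in> T ` ({i} \<times> {..<j})"
    then obtain j' where j': "j' < j" "m = T (i, j')" by auto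
    have "(i, j') \<in> cells lam" using ij j' by (auto simp: cells_def)
    then show "m \<in> {m \<in> {1..sum_list lam}. row_of lam T m = i \<and> m < T (i, j)}"
      using j' syt_entry_range syt_row_of_entry syt_row_strict[OF ij j'(1)] by auto
  qed
  show "{m \<in> {1..sum_list lam}. row_of lam T m = i \<and> m < T (i, j)} \<subseteq> T ` ({i} \<times> {..<j})"
  proof
    fix m assume m: "m \<in> {m \<in> {1..sum_list lam}. row_of lam T m = i \<and> m < T (i, j)}"
    then obtain j' where c: "(i, j') \<in> cells lam" "T (i, j') = m"
      using syt_cell_of_row by blast
    have "j' < j"
    proof (rule ccontr)
      assume "\<not> j' < j"
      then have "T (i, j) \<le> T (i, j')" using syt_row_strict[OF c(1), of j] by (cases "j = j'") auto
      then show False using m c by simp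
    qed
    then show "m \<in> T ` ({i} \<times> {..<j})" using c by force
  qed
qed

lemma syt_card_row_prefix:
  assumes "(i, j) \<in> cells lam"
  shows "card {m \<in> {1..sum_list lam}. row_of lam T m = i \<and> m < T (i, j)} = j"
proof -
  have "{i} \<times> {..<j} \<subseteq> cells lam" using assms by (auto simp: cells_def)
  then have "card (T ` ({i} \<times> {..<j})) = card ({i} \<times> {..<j})"
    by (intro card_image inj_on_subset[OF syt_inj])
  then show ?thesis unfolding syt_row_prefix[OF assms] by (simp add: card_cartesian_product)
qed

lemma syt_card_row:
  assumes "i < length lam"
  shows "card {m \<in> {1..sum_list lam}. row_of lam T m = i} = lam ! i"
proof -
  have "{m \<in> {1..sum_list lam}. row_of lam T m = i} = T ` ({i} \<times> {..<lam ! i})"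
  proof
    show "{m \<in> {1..sum_list lam}. row_of lam T m = i} \<subseteq> T ` ({i} \<times> {..<lam ! i})"
    proof
      fix m assume "m \<in> {m \<in> {1..sum_list lam}. row_of lam T m = i}"
      then obtain j where "(i, j) \<in> cells lam" "T (i, j) = m"
        using syt_cell_of_row by blast
      then show "m \<in> T ` ({i} \<times> {..<lam ! i})" by (force simp: cells_def)
    qed
    show "T ` ({i} \<times> {..<lam ! i}) \<subseteq> {m \<in> {1..sum_list lam}. row_of lam T m = i}"
      using assms syt_entry_range syt_row_of_entry by (auto simp: cells_def)
  qed
  moreover have "{i} \<times> {..<lam ! i} \<subseteq> cells lam" using assms by (auto simp: cells_def)
  then have "card (T ` ({i} \<times> {..<lam ! i})) = card ({i} \<times> {..<lam ! i})"
    by (intro card_image inj_on_subset[OF syt_inj])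
  ultimately show ?thesis by (simp add: card_cartesian_product)
qed

text \<open>The injection sends an entry of row i+1 to the entry directly above it.\<close>

lemma syt_card_row_lattice:
  assumes lam: "is_partition lam" and k: "k \<le> sum_list lam" and i: "Suc i < length lam"
  shows "card {m \<in> {1..k}. row_of lam T m = Suc i} \<le> card {m \<in> {1..k}. row_of lam T m = i}"
proof (rule card_inj_on_le)
  define above where "above m = T (i, snd (inv_into (cells lam) T m))" for m
  have above: "(i, j) \<in> cells lam \<and> above m = T (i, j) \<and> T (i, j) < m"
    if "m \<in> {1..k}" "row_of lam T m = Suc i" "(Suc i, j) \<in> cells lam" "T (Suc i, j) = m" for m j
  proof -
    have "j < lam ! i" using that(3) is_partition_nth_Suc_le[OF lam i] by (simp add: cells_def)
    then have ij: "(i, j) \<in> cells lam" using i by (simp add: cells_def)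
    moreover have "inv_into (cells lam) T m = (Suc i, j)"
      using inv_into_f_f[OF syt_inj that(3)] that(4) by simp
    ultimately show ?thesis using syt that by (auto simp: syt_def above_def)
  qed
  show "above ` {m \<in> {1..k}. row_of lam T m = Suc i} \<subseteq> {m \<in> {1..k}. row_of lam T m = i}"
  proof
    fix x assume "x \<in> above ` {m \<in> {1..k}. row_of lam T m = Suc i}"
    then obtain m where m: "m \<in> {1..k}" "row_of lam T m = Suc i" and x: "x = above m" by auto
    obtain j where "(Suc i, j) \<in> cells lam" "T (Suc i, j) = m"
      using m k syt_cell_of_row[of m] by auto
    then show "x \<in> {m \<in> {1..k}. row_of lam T m = i}"
      using above[OF m] x m syt_entry_range syt_row_of_entry by fastforce
  qed
  show "inj_on above {m \<in> {1..k}. row_of lam T m = Suc i}"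
  proof
    fix m1 m2 assume m1: "m1 \<in> {m \<in> {1..k}. row_of lam T m = Suc i}"
      and m2: "m2 \<in> {m \<in> {1..k}. row_of lam T m = Suc i}" and e: "above m1 = above m2"
    obtain j1 where c1: "(Suc i, j1) \<in> cells lam" "T (Suc i, j1) = m1"
      using m1 k syt_cell_of_row[of m1] by auto
    obtain j2 where c2: "(Suc i, j2) \<in> cells lam" "T (Suc i, j2) = m2"
      using m2 k syt_cell_of_row[of m2] by auto
    have "(i, j1) \<in> cells lam" "(i, j2) \<in> cells lam" "T (i, j1) = T (i, j2)"
      using above[of m1 j1] above[of m2 j2] m1 m2 c1 c2 e by auto
    then have "j1 = j2" using syt_inj by (auto dest: inj_onD)
    then show "m1 = m2" using c1 c2 by simp
  qed
qed simp

lemma length_row_word: "length (row_word lam T) = sum_list lam"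
  by (simp add: row_word_def del: upt_Suc)

lemma nth_row_word: "k < sum_list lam \<Longrightarrow> row_word lam T ! k = row_of lam T (Suc k)"
  by (simp add: row_word_def del: upt_Suc)

lemma row_word_yamanouchi: "is_partition lam \<Longrightarrow> row_word lam T \<in> yamanouchi lam"
proof -
  assume lam: "is_partition lam"
  have intv: "{1..<Suc k} = {1..k}" for k :: nat by auto
  have "\<forall>x\<in>set (row_word lam T). x < length lam"
    using syt_row_of_less by (auto simp: row_word_def)
  moreover have "\<forall>i<length lam. count_list (row_word lam T) i = lam ! i"
  proof (intro allI impI)
    fix i assume "i < length lam"
    then show "count_list (row_word lam T) i = lam ! i"
      using syt_card_row[of i] intv[of "sum_list lam"]
      by (simp add: row_word_def count_list_map_upt del: upt_Suc)
  qed
  moreover have "lattice_word (length lam) (row_word lam T)"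
    unfolding lattice_word_def length_row_word
  proof (intro allI impI)
    fix k i assume k: "k \<le> sum_list lam" and i: "Suc i < length lam"
    have "take k (row_word lam T) = map (row_of lam T) [1..<Suc k]"
      using k by (simp add: row_word_def take_map del: upt_Suc)
    then show "count_list (take k (row_word lam T)) (Suc i) \<le> count_list (take k (row_word lam T)) i"
      using syt_card_row_lattice[OF lam k i] by (simp add: count_list_map_upt less_Suc_eq_le del: upt_Suc)
  qed
  ultimately show ?thesis by (simp add: yamanouchi_def)
qed

lemma descents_eq_word_descents: "descents lam T = word_descents (row_word lam T)"
  by (auto simp: descents_def word_descents_def length_row_word nth_row_word)

end

lemma card_less_in_set_inj:
  fixes R :: "nat set"
  assumes "finite R" "x \<in> R" "y \<in> R" "card {m \<in> R. m < x} = card {m \<in> R. m < y}"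
  shows "x = y"
proof -
  have lt: "card {m \<in> R. m < u} < card {m \<in> R. m < v}" if "u \<in> R" "u < v" for u v
    using assms(1) that by (intro psubset_card_mono) auto
  show ?thesis
  proof (rule linorder_cases[of x y])
    assume "x < y" then show ?thesis using lt[of x y] assms by simp
  next
    assume "y < x" then show ?thesis using lt[of y x] assms by simp
  qed
qed

text \<open>A tableau is recovered from its row word: the entry in cell (i, j) is the (j+1)-st
  position of the letter i.\<close>

lemma row_word_inj:
  assumes s1: "syt lam T1" and s2: "syt lam T2" and e: "row_word lam T1 = row_word lam T2"
  shows "T1 = T2"
proof
  fix c :: "nat \<times> nat"
  obtain i j where c: "c = (i, j)" by fastforce
  have rows: "row_of lam T1 m = row_of lam T2 m" if "m \<in> {1..sum_list lam}" for m
    using that e nth_row_word[OF s1, of "m - 1"] nth_row_word[OF s2, of "m - 1"] by auto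
  show "T1 c = T2 c"
  proof (cases "c \<in> cells lam")
    case False
    then have "T1 c = 0" "T2 c = 0" using s1 s2 unfolding syt_def by blast+
    then show ?thesis by simp
  next
    case True
    define R where "R = {m \<in> {1..sum_list lam}. row_of lam T1 m = i}"
    have R2: "R = {m \<in> {1..sum_list lam}. row_of lam T2 m = i}"
      unfolding R_def using rows by auto
    have x: "T1 c \<in> R" using syt_entry_range[OF s1 True] syt_row_of_entry[OF s1] True c by (simp add: R_def)
    have y: "T2 c \<in> R" using syt_entry_range[OF s2 True] syt_row_of_entry[OF s2] True c by (simp add: R2)
    have "card {m \<in> R. m < T1 c} = j"
      using syt_card_row_prefix[OF s1, of i j] True c by (simp add: R_def conj_assoc)
    moreover have "card {m \<in> R. m < T2 c} = j"
      unfolding R2 using syt_card_row_prefix[OF s2, of i j] True c by (simp add: conj_assoc)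
    ultimately show ?thesis using card_less_in_set_inj[of R, OF _ x y] by (simp add: R_def)
  qed
qed

definition positions :: "nat list \<Rightarrow> nat \<Rightarrow> nat list" where
  "positions w i = filter (\<lambda>k. w ! k = i) [0..<length w]"

definition tableau_of_word :: "nat list \<Rightarrow> nat list \<Rightarrow> nat \<times> nat \<Rightarrow> nat" where
  "tableau_of_word lam w = (\<lambda>(i, j). if (i, j) \<in> cells lam then Suc (positions w i ! j) else 0)"

lemma length_positions: "length (positions w i) = count_list w i"
proof -
  have "{t. t < length w \<and> w ! ([0..<length w] ! t) = i} = {t. t < length w \<and> w ! t = i}"
    by auto
  then have "length (positions w i) = card {t. t < length w \<and> w ! t = i}"
    by (simp add: positions_def length_filter_conv_card)
  also have "\<dots> = count_list w i"
    by (simp add: count_list_eq_length_filter length_filter_conv_card eq_commute)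
  finally show ?thesis .
qed

lemma distinct_positions: "distinct (positions w i)"
  by (simp add: positions_def)

lemma sorted_wrt_positions: "sorted_wrt (<) (positions w i)"
  unfolding positions_def by (intro sorted_wrt_filter) simp

lemma nth_positions_count:
  assumes "k < length w" "w ! k = i"
  shows "positions w i ! count_list (take k w) i = k \<and> count_list (take k w) i < length (positions w i)"
proof -
  have u: "[0..<length w] = [0..<k] @ k # [Suc k..<length w]"
    using assms(1) by (metis le_add1 less_imp_le_nat upt_add_eq_append upt_conv_Cons add_0 le_add_diff_inverse)
  have "filter (\<lambda>t. w ! t = i) [0..<k] = positions (take k w) i"
    unfolding positions_def using assms(1) by (auto intro!: filter_cong)
  then have l: "length (filter (\<lambda>t. w ! t = i) [0..<k]) = count_list (take k w) i"
    by (simp add: length_positions)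
  have "positions w i = filter (\<lambda>t. w ! t = i) [0..<k] @ k # filter (\<lambda>t. w ! t = i) [Suc k..<length w]"
    unfolding positions_def by (subst u) (simp add: assms(2))
  then show ?thesis using l by (simp add: nth_append)
qed

lemma nth_positions:
  assumes "j < length (positions w i)"
  shows "positions w i ! j < length w \<and> w ! (positions w i ! j) = i
         \<and> count_list (take (positions w i ! j) w) i = j"
proof -
  have a: "positions w i ! j < length w" "w ! (positions w i ! j) = i"
    using nth_mem[OF assms] by (auto simp: positions_def)
  then have "positions w i ! count_list (take (positions w i ! j) w) i = positions w i ! j"
    "count_list (take (positions w i ! j) w) i < length (positions w i)"
    using nth_positions_count by blast+
  then have "count_list (take (positions w i ! j) w) i = j"
    using nth_eq_iff_index_eq[OF distinct_positions _ assms] by blast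
  then show ?thesis using a by simp
qed

lemma count_list_take_mono: "k \<le> k' \<Longrightarrow> count_list (take k w) i \<le> count_list (take k' w) i"
  by (metis count_list_take_le min.absorb1 take_take)

lemma count_list_take_Suc:
  "k < length w \<Longrightarrow> count_list (take (Suc k) w) i = count_list (take k w) i + (if w ! k = i then 1 else 0)"
  by (simp add: take_Suc_conv_app_nth)

context
  fixes lam w
  assumes yam: "w \<in> yamanouchi lam"
begin

lemma yamanouchi_count: "i < length lam \<Longrightarrow> count_list w i = lam ! i"
  using yam by (simp add: yamanouchi_def)

lemma yamanouchi_letter: "k < length w \<Longrightarrow> w ! k < length lam"
  using yam by (auto simp: yamanouchi_def)

lemma yamanouchi_lattice:
  "k \<le> length w \<Longrightarrow> Suc i < length lam \<Longrightarrow> count_list (take k w) (Suc i) \<le> count_list (take k w) i"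
  using yam by (simp add: yamanouchi_def lattice_word_def)

lemma cells_positions: "(i, j) \<in> cells lam \<longleftrightarrow> i < length lam \<and> j < length (positions w i)"
  by (auto simp: cells_def length_positions yamanouchi_count)

lemma tableau_of_word_cell: "(i, j) \<in> cells lam \<Longrightarrow> tableau_of_word lam w (i, j) = Suc (positions w i ! j)"
  by (simp add: tableau_of_word_def)

lemma tableau_of_word_at_letter:
  assumes "k < length w"
  shows "(w ! k, count_list (take k w) (w ! k)) \<in> cells lam
       \<and> tableau_of_word lam w (w ! k, count_list (take k w) (w ! k)) = Suc k"
  using nth_positions_count[OF assms refl] yamanouchi_letter[OF assms]
  by (simp add: cells_positions tableau_of_word_cell)

lemma inj_on_tableau_of_word: "inj_on (tableau_of_word lam w) (cells lam)"
proof
  fix x y assume x: "x \<in> cells lam" and y: "y \<in> cells lam"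
    and e: "tableau_of_word lam w x = tableau_of_word lam w y"
  obtain i j i' j' where xy: "x = (i, j)" "y = (i', j')" by fastforce
  have e2: "positions w i ! j = positions w i' ! j'" using e x y xy by (simp add: tableau_of_word_cell)
  have j: "j < length (positions w i)" and j': "j' < length (positions w i')"
    using x y xy cells_positions by auto
  have "i = i'" using nth_positions[OF j] nth_positions[OF j'] e2 by metis
  then have "j = j'" using e2 j j' nth_eq_iff_index_eq[OF distinct_positions] by metis
  then show "x = y" using xy \<open>i = i'\<close> by simp
qed

lemma image_tableau_of_word: "tableau_of_word lam w ` cells lam = {1..sum_list lam}"
proof
  show "tableau_of_word lam w ` cells lam \<subseteq> {1..sum_list lam}"
  proof
    fix m assume "m \<in> tableau_of_word lam w ` cells lam"
    then obtain i j where c: "(i, j) \<in> cells lam" "m = tableau_of_word lam w (i, j)" by auto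
    then have "positions w i ! j < length w" using nth_positions cells_positions by blast
    then show "m \<in> {1..sum_list lam}"
      using c length_yamanouchi[OF yam] by (simp add: tableau_of_word_cell)
  qed
  show "{1..sum_list lam} \<subseteq> tableau_of_word lam w ` cells lam"
  proof
    fix m assume m: "m \<in> {1..sum_list lam}"
    then have "m - 1 < length w" using length_yamanouchi[OF yam] by auto
    then show "m \<in> tableau_of_word lam w ` cells lam"
      using tableau_of_word_at_letter[of "m - 1"] m by (force intro: rev_image_eqI)
  qed
qed

lemma syt_tableau_of_word: "syt lam (tableau_of_word lam w)"
  unfolding syt_def
proof (intro conjI allI impI)
  show "bij_betw (tableau_of_word lam w) (cells lam) {1..sum_list lam}"
    using inj_on_tableau_of_word image_tableau_of_word by (simp add: bij_betw_def)
next
  fix i j assume "(i, j) \<in> cells lam \<and> (i, Suc j) \<in> cells lam"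
  then show "tableau_of_word lam w (i, j) < tableau_of_word lam w (i, Suc j)"
    using sorted_wrt_positions by (simp add: tableau_of_word_cell cells_positions sorted_wrt_nth_less)
next
  fix i j assume a: "(i, j) \<in> cells lam \<and> (Suc i, j) \<in> cells lam"
  then have j1: "j < length (positions w (Suc i))" and si: "Suc i < length lam"
    and j0: "j < length (positions w i)" by (auto simp: cells_positions)
  define k where "k = positions w (Suc i) ! j"
  have k: "k < length w" "w ! k = Suc i" "count_list (take k w) (Suc i) = j"
    using nth_positions[OF j1] by (auto simp: k_def)
  (* the lattice property at the prefix ending in position k: at least j + 1 letters i precede k *)
  have "Suc j \<le> count_list (take (Suc k) w) i"
    using yamanouchi_lattice[of "Suc k" i] count_list_take_Suc[OF k(1), of "Suc i"] k si by simp
  then have ge: "Suc j \<le> count_list (take k w) i" using count_list_take_Suc[OF k(1), of i] k(2) by simp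
  define k' where "k' = positions w i ! j"
  have k': "count_list (take k' w) i = j" using nth_positions[OF j0] by (simp add: k'_def)
  have "k' < k"
  proof (rule ccontr)
    assume "\<not> k' < k"
    then have "count_list (take k w) i \<le> count_list (take k' w) i" by (intro count_list_take_mono) simp
    then show False using ge k' by simp
  qed
  then show "tableau_of_word lam w (i, j) < tableau_of_word lam w (Suc i, j)"
    using a by (simp add: tableau_of_word_cell k_def k'_def)
next
  fix c assume "c \<notin> cells lam"
  then show "tableau_of_word lam w c = 0" by (cases c) (auto simp: tableau_of_word_def)
qed

lemma row_word_tableau_of_word: "row_word lam (tableau_of_word lam w) = w"
proof (rule nth_equalityI)
  show "length (row_word lam (tableau_of_word lam w)) = length w"
    by (simp add: length_row_word[OF syt_tableau_of_word] length_yamanouchi[OF yam])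
  fix k assume "k < length (row_word lam (tableau_of_word lam w))"
  then have k: "k < length w"
    by (simp add: length_row_word[OF syt_tableau_of_word] length_yamanouchi[OF yam])
  have "inv_into (cells lam) (tableau_of_word lam w) (Suc k) = (w ! k, count_list (take k w) (w ! k))"
    using tableau_of_word_at_letter[OF k] inv_into_f_f[OF inj_on_tableau_of_word] by metis
  then show "row_word lam (tableau_of_word lam w) ! k = w ! k"
    using k nth_row_word[OF syt_tableau_of_word] length_yamanouchi[OF yam] by (simp add: row_of_def)
qed

end

lemma bij_betw_row_word:
  assumes "is_partition lam"
  shows "bij_betw (row_word lam) {T. syt lam T \<and> des lam T = i} {w \<in> yamanouchi lam. card (word_descents w) = i}"
proof (rule bij_betwI')
  fix T1 T2 assume "T1 \<in> {T. syt lam T \<and> des lam T = i}" "T2 \<in> {T. syt lam T \<and> des lam T = i}"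
  then show "(row_word lam T1 = row_word lam T2) = (T1 = T2)" using row_word_inj by auto
next
  fix T assume "T \<in> {T. syt lam T \<and> des lam T = i}"
  then show "row_word lam T \<in> {w \<in> yamanouchi lam. card (word_descents w) = i}"
    using row_word_yamanouchi[OF _ assms] descents_eq_word_descents by (auto simp: des_def)
next
  fix w assume w: "w \<in> {w \<in> yamanouchi lam. card (word_descents w) = i}"
  then have "syt lam (tableau_of_word lam w)" "row_word lam (tableau_of_word lam w) = w"
    using syt_tableau_of_word row_word_tableau_of_word by auto
  then show "\<exists>T\<in>{T. syt lam T \<and> des lam T = i}. w = row_word lam T"
    using w descents_eq_word_descents by (auto simp: des_def intro!: bexI[of _ "tableau_of_word lam w"])
qed

lemma f_poly_eq_sum_yamanouchi:
  assumes "is_partition lam"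
  shows "f_poly lam i = (\<Sum>w\<in>{w \<in> yamanouchi lam. card (word_descents w) = i}. qvar ^ \<Sum>(word_descents w))"
proof -
  have "f_poly lam i = (\<Sum>T\<in>{T. syt lam T \<and> des lam T = i}. qvar ^ \<Sum>(word_descents (row_word lam T)))"
    unfolding f_poly_def maj_def by (intro sum.cong) (auto simp: descents_eq_word_descents)
  also have "\<dots> = (\<Sum>w\<in>{w \<in> yamanouchi lam. card (word_descents w) = i}. qvar ^ \<Sum>(word_descents w))"
    by (rule sum.reindex_bij_betw[OF bij_betw_row_word[OF assms]])
  finally show ?thesis .
qed

section \<open>The last-letter recursion for three rows\<close>

lemma lattice_word_snoc:
  "lattice_word L (u @ [r]) \<longleftrightarrow>
     lattice_word L u \<and> (\<forall>i. Suc i < L \<longrightarrow> count_list (u @ [r]) (Suc i) \<le> count_list (u @ [r]) i)"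
proof -
  have "take k (u @ [r]) = (if k \<le> length u then take k u else u @ [r])" if "k \<le> Suc (length u)" for k
    using that by (auto simp: le_Suc_eq)
  then show ?thesis
    unfolding lattice_word_def by (auto simp: le_Suc_eq)
qed

definition content3 :: "nat \<Rightarrow> nat \<Rightarrow> nat \<Rightarrow> nat \<Rightarrow> nat" where
  "content3 a b c r = (if r = 0 then a else if r = 1 then b else c)"

definition remove_letter :: "nat \<Rightarrow> nat \<Rightarrow> nat \<Rightarrow> nat" where
  "remove_letter r k x = (if r = k then x - 1 else x)"

lemma all_less_3_iff: "(\<forall>i<3. P i) \<longleftrightarrow> P 0 \<and> P 1 \<and> P (2::nat)"
  unfolding numeral_3_eq_3 by (auto simp: less_Suc_eq numeral_2_eq_2)

lemma yamanouchi3_iff: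
  "w \<in> yamanouchi [a, b, c] \<longleftrightarrow> (\<forall>x\<in>set w. x < 3) \<and> count_list w 0 = a \<and> count_list w 1 = b
     \<and> count_list w 2 = c \<and> lattice_word 3 w"
proof -
  have len: "length [a, b, c] = 3" by simp
  have "(\<forall>i<3. count_list w i = [a, b, c] ! i) \<longleftrightarrow>
        count_list w 0 = a \<and> count_list w 1 = b \<and> count_list w 2 = c"
    unfolding all_less_3_iff by (simp add: numeral_2_eq_2)
  then show ?thesis unfolding yamanouchi_def mem_Collect_eq len by (simp only: conj_assoc)
qed

lemma lattice_word3_snoc:
  "lattice_word 3 (u @ [r]) \<longleftrightarrow> lattice_word 3 u \<and> count_list (u @ [r]) 1 \<le> count_list (u @ [r]) 0
     \<and> count_list (u @ [r]) 2 \<le> count_list (u @ [r]) 1"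
proof -
  have "(\<forall>i. Suc i < 3 \<longrightarrow> P i) \<longleftrightarrow> P 0 \<and> P 1" for P
    by (auto simp: numeral_3_eq_3 less_Suc_eq)
  then show ?thesis unfolding lattice_word_snoc by (simp add: numeral_2_eq_2)
qed

lemma snoc_yamanouchi3_iff:
  assumes "r < 3"
  shows "u @ [r] \<in> yamanouchi [a, b, c] \<longleftrightarrow>
         u \<in> yamanouchi [remove_letter r 0 a, remove_letter r 1 b, remove_letter r 2 c]
         \<and> content3 a b c r \<noteq> 0 \<and> b \<le> a \<and> c \<le> b"
proof -
  have "r = 0 \<or> r = 1 \<or> r = 2" using assms by auto
  then show ?thesis
    unfolding yamanouchi3_iff lattice_word3_snoc by (auto simp: remove_letter_def content3_def)
qed

lemma word_descents_snoc:
  assumes "u \<noteq> []"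
  shows "word_descents (u @ [r]) = word_descents u \<union> (if last u < r then {length u} else {})"
proof (rule set_eqI)
  fix m
  have l: "u ! (length u - 1) = last u" "length u \<ge> 1"
    using assms by (simp_all add: last_conv_nth Suc_le_eq)
  show "m \<in> word_descents (u @ [r]) \<longleftrightarrow> m \<in> word_descents u \<union> (if last u < r then {length u} else {})"
  proof (cases "m < length u")
    case True
    then show ?thesis by (auto simp: word_descents_def nth_append)
  next
    case False
    then show ?thesis using l by (cases "m = length u") (auto simp: word_descents_def nth_append)
  qed
qed

lemma word_descents_subset: "word_descents u \<subseteq> {..<length u}"
  by (auto simp: word_descents_def)

definition ending_weight :: "nat \<Rightarrow> nat \<Rightarrow> nat list \<Rightarrow> int poly" where
  "ending_weight r i w =
     (if w \<noteq> [] \<and> last w = r \<and> card (word_descents w) = i then qvar ^ \<Sum>(word_descents w) else 0)"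

definition yam_gf :: "nat \<Rightarrow> nat \<Rightarrow> nat \<Rightarrow> nat \<Rightarrow> nat \<Rightarrow> int poly" where
  "yam_gf a b c r i = (\<Sum>w\<in>yamanouchi [a, b, c]. ending_weight r i w)"

lemma ending_weight_snoc:
  assumes "u \<noteq> []" "last u < 3"
  shows "ending_weight r i (u @ [r]) =
    (\<Sum>r'<3. if r' < r then (if i = 0 then 0 else qvar ^ length u * ending_weight r' (i - 1) u)
             else ending_weight r' i u)"
proof -
  have fin: "finite (word_descents u)"
    by (rule finite_subset[OF word_descents_subset]) simp
  have nin: "length u \<notin> word_descents u"
    using word_descents_subset by blast
  have "ending_weight r i (u @ [r]) =
    (if last u < r then (if i = 0 then 0 else qvar ^ length u * ending_weight (last u) (i - 1) u)
     else ending_weight (last u) i u)"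
  proof (cases "last u < r")
    case True
    then have "word_descents (u @ [r]) = insert (length u) (word_descents u)"
      using word_descents_snoc[OF assms(1)] by simp
    then have "card (word_descents (u @ [r])) = Suc (card (word_descents u))"
      "\<Sum>(word_descents (u @ [r])) = length u + \<Sum>(word_descents u)"
      using fin nin by simp_all
    then show ?thesis using True assms(1) by (cases i) (simp_all add: ending_weight_def power_add)
  next
    case False
    then show ?thesis using word_descents_snoc[OF assms(1)] assms(1) by (simp add: ending_weight_def)
  qed
  also have "\<dots> = (\<Sum>r'\<in>{last u}. if r' < r then (if i = 0 then 0 else qvar ^ length u * ending_weight r' (i - 1) u)
                 else ending_weight r' i u)"
    by simp
  also have "\<dots> = (\<Sum>r'<3. if r' < r then (if i = 0 then 0 else qvar ^ length u * ending_weight r' (i - 1) u)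
                 else ending_weight r' i u)"
    using assms(2) by (intro sum.mono_neutral_cong_left) (auto simp: ending_weight_def)
  finally show ?thesis .
qed

lemma yam_gf_invalid:
  assumes "r < 3" "\<not> (b \<le> a \<and> c \<le> b) \<or> content3 a b c r = 0"
  shows "yam_gf a b c r i = 0"
  unfolding yam_gf_def
proof (rule sum.neutral, rule ballI)
  fix w assume w: "w \<in> yamanouchi [a, b, c]"
  show "ending_weight r i w = 0"
  proof (cases "w \<noteq> [] \<and> last w = r")
    case True
    then have "butlast w @ [r] \<in> yamanouchi [a, b, c]" using w by (metis append_butlast_last_id)
    then show ?thesis using snoc_yamanouchi3_iff[OF assms(1)] assms(2) by blast
  qed (auto simp: ending_weight_def)
qed

lemma yamanouchi_single: "yamanouchi [1, 0, 0] = {[0]}"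
proof
  show "{[0]} \<subseteq> yamanouchi [1, 0, 0]"
    by (simp add: yamanouchi3_iff lattice_word_def le_Suc_eq)
  show "yamanouchi [1, 0, 0] \<subseteq> {[0]}"
  proof
    fix w assume w: "w \<in> yamanouchi [1, 0, 0]"
    then obtain x where x: "w = [x]" using length_yamanouchi[OF w] by (auto simp: length_Suc_conv)
    then have "x = 0" using w by (auto simp: yamanouchi3_iff split: if_splits)
    then show "w \<in> {[0]}" using x by simp
  qed
qed

lemma yam_gf_single:
  assumes "r < 3" "b \<le> a" "c \<le> b" "content3 a b c r \<noteq> 0" "a + b + c = 1"
  shows "yam_gf a b c r i = (if i = 0 then 1 else 0)"
proof -
  have "a = 1" "b = 0" "c = 0" "r = 0" using assms by (auto simp: content3_def split: if_splits)
  moreover have "word_descents [0] = {}" by (auto simp: word_descents_def)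
  then have "yam_gf 1 0 0 0 i = (if i = 0 then 1 else 0)"
    unfolding yam_gf_def yamanouchi_single by (simp add: ending_weight_def)
  ultimately show ?thesis by simp
qed

lemma yam_gf_eq_sum_snoc:
  assumes r: "r < 3" and valid: "b \<le> a" "c \<le> b" "content3 a b c r \<noteq> 0"
  defines "a' \<equiv> remove_letter r 0 a" and "b' \<equiv> remove_letter r 1 b" and "c' \<equiv> remove_letter r 2 c"
  shows "yam_gf a b c r i = (\<Sum>u\<in>yamanouchi [a', b', c']. ending_weight r i (u @ [r]))"
proof -
  have mem: "u @ [r] \<in> yamanouchi [a, b, c] \<longleftrightarrow> u \<in> yamanouchi [a', b', c']" for u
    using snoc_yamanouchi3_iff[OF r] valid unfolding a'_def b'_def c'_def by blast
  have "yam_gf a b c r i = (\<Sum>w\<in>(\<lambda>u. u @ [r]) ` yamanouchi [a', b', c']. ending_weight r i w)"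
    unfolding yam_gf_def
  proof (rule sum.mono_neutral_right)
    show "\<forall>w\<in>yamanouchi [a, b, c] - (\<lambda>u. u @ [r]) ` yamanouchi [a', b', c']. ending_weight r i w = 0"
    proof
      fix w assume w: "w \<in> yamanouchi [a, b, c] - (\<lambda>u. u @ [r]) ` yamanouchi [a', b', c']"
      show "ending_weight r i w = 0"
      proof (cases "w \<noteq> [] \<and> last w = r")
        case True
        then have "w = butlast w @ [r]" by (metis append_butlast_last_id)
        then show ?thesis using w mem by (metis Diff_iff image_eqI)
      qed (auto simp: ending_weight_def)
    qed
    show "(\<lambda>u. u @ [r]) ` yamanouchi [a', b', c'] \<subseteq> yamanouchi [a, b, c]" using mem by blast
  qed (rule finite_yamanouchi)
  also have "\<dots> = (\<Sum>u\<in>yamanouchi [a', b', c']. ending_weight r i (u @ [r]))"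
    by (simp add: sum.reindex inj_on_def)
  finally show ?thesis .
qed

lemma yam_gf_snoc:
  assumes r: "r < 3" and valid: "b \<le> a" "c \<le> b" "content3 a b c r \<noteq> 0" and "a + b + c \<noteq> 1"
  defines "a' \<equiv> remove_letter r 0 a" and "b' \<equiv> remove_letter r 1 b" and "c' \<equiv> remove_letter r 2 c"
  shows "yam_gf a b c r i = (\<Sum>r'<3. if r' < r then (if i = 0 then 0 else qvar ^ (a + b + c - 1) * yam_gf a' b' c' r' (i - 1))
                                     else yam_gf a' b' c' r' i)"
proof -
  have len: "length u = a + b + c - 1" and ne: "u \<noteq> []" and last3: "last u < 3"
    if "u \<in> yamanouchi [a', b', c']" for u
  proof -
    have "u @ [r] \<in> yamanouchi [a, b, c]"
      using that snoc_yamanouchi3_iff[OF r] valid unfolding a'_def b'_def c'_def by blast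
    from length_yamanouchi[OF this] show len: "length u = a + b + c - 1" by simp
    have "a + b + c \<ge> 1" using valid by (auto simp: content3_def split: if_splits)
    then show ne: "u \<noteq> []" using len \<open>a + b + c \<noteq> 1\<close> by auto
    show "last u < 3" using ne that last_in_set[of u] by (auto simp: yamanouchi3_iff)
  qed
  have "yam_gf a b c r i = (\<Sum>u\<in>yamanouchi [a', b', c']. \<Sum>r'<3. if r' < r
      then (if i = 0 then 0 else qvar ^ (a + b + c - 1) * ending_weight r' (i - 1) u) else ending_weight r' i u)"
    unfolding yam_gf_eq_sum_snoc[OF r valid, folded a'_def b'_def c'_def]
  proof (rule sum.cong[OF refl])
    fix u assume u: "u \<in> yamanouchi [a', b', c']"
    then show "ending_weight r i (u @ [r]) = (\<Sum>r'<3. if r' < r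
      then (if i = 0 then 0 else qvar ^ (a + b + c - 1) * ending_weight r' (i - 1) u) else ending_weight r' i u)"
      by (simp only: ending_weight_snoc[OF ne[OF u] last3[OF u]] len[OF u])
  qed
  also have "\<dots> = (\<Sum>r'<3. if r' < r then (if i = 0 then 0 else qvar ^ (a + b + c - 1) * yam_gf a' b' c' r' (i - 1))
                                     else yam_gf a' b' c' r' i)"
    by (subst sum.swap, intro sum.cong refl) (simp add: yam_gf_def sum_distrib_left)
  finally show ?thesis .
qed

text \<open>The recursion obtained by deleting the last letter r; e is the value at the word [0].\<close>

definition last_letter_rec ::
  "int poly \<Rightarrow> (nat \<Rightarrow> nat \<Rightarrow> nat \<Rightarrow> nat \<Rightarrow> nat \<Rightarrow> int poly) \<Rightarrow> nat \<Rightarrow> nat \<Rightarrow> nat \<Rightarrow> nat \<Rightarrow> nat \<Rightarrow> int poly"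
where
  "last_letter_rec e F a b c r i =
     (if \<not> (b \<le> a \<and> c \<le> b) \<or> content3 a b c r = 0 then 0
      else if a + b + c = 1 then (if i = 0 then e else 0)
      else (\<Sum>r'<3. if r' < r
        then (if i = 0 then 0
              else qvar ^ (a + b + c - 1) *
                   F (remove_letter r 0 a) (remove_letter r 1 b) (remove_letter r 2 c) r' (i - 1))
        else F (remove_letter r 0 a) (remove_letter r 1 b) (remove_letter r 2 c) r' i))"

lemma yam_gf_last_letter_rec: "r < 3 \<Longrightarrow> yam_gf a b c r i = last_letter_rec 1 yam_gf a b c r i"
  using yam_gf_invalid yam_gf_single yam_gf_snoc by (simp add: last_letter_rec_def)

lemma last_letter_rec_scale:
  "e * last_letter_rec 1 F a b c r i = last_letter_rec e (\<lambda>a b c r i. e * F a b c r i) a b c r i"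
  unfolding last_letter_rec_def by (simp add: sum_distrib_left if_distrib mult.left_commute cong: if_cong)

lemma last_letter_rec_cong:
  assumes "\<And>r' j. r' < 3 \<Longrightarrow> b \<le> a \<Longrightarrow> c \<le> b \<Longrightarrow> content3 a b c r \<noteq> 0 \<Longrightarrow>
      F (remove_letter r 0 a) (remove_letter r 1 b) (remove_letter r 2 c) r' j =
      G (remove_letter r 0 a) (remove_letter r 1 b) (remove_letter r 2 c) r' j"
  shows "last_letter_rec e F a b c r i = last_letter_rec e G a b c r i"
  unfolding last_letter_rec_def using assms by (auto intro!: sum.cong)

lemma eq_mult_yam_gf_if_last_letter_rec:
  assumes rec: "\<And>a b c r i. 1 \<le> a \<Longrightarrow> b \<le> B \<Longrightarrow> c \<le> C \<Longrightarrow> r < 3 \<Longrightarrow>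
      G a b c r i = last_letter_rec e G a b c r i"
    and zero: "\<And>b c r i. G 0 b c r i = 0"
    and "b \<le> B" "c \<le> C" "r < 3"
  shows "e * yam_gf a b c r i = G a b c r i"
  using assms(3-5)
proof (induction "a + b + c" arbitrary: a b c r i rule: less_induct)
  case less
  show ?case
  proof (cases "a = 0")
    case True
    then have "yam_gf a b c r i = 0" using less.prems by (intro yam_gf_invalid) (auto simp: content3_def)
    then show ?thesis using True zero by simp
  next
    case False
    have "e * yam_gf a b c r i = last_letter_rec e (\<lambda>a b c r i. e * yam_gf a b c r i) a b c r i"
      using yam_gf_last_letter_rec[OF less.prems(3)] last_letter_rec_scale by metis
    also have "\<dots> = last_letter_rec e G a b c r i"
    proof (rule last_letter_rec_cong)
      fix r' j :: nat assume "r' < 3" and valid: "b \<le> a" "c \<le> b" "content3 a b c r \<noteq> 0"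
      moreover have "remove_letter r 0 a + remove_letter r 1 b + remove_letter r 2 c < a + b + c"
        using valid less.prems(3) by (auto simp: remove_letter_def content3_def)
      moreover have "remove_letter r 1 b \<le> B" "remove_letter r 2 c \<le> C"
        using less.prems by (auto simp: remove_letter_def)
      ultimately show "e * yam_gf (remove_letter r 0 a) (remove_letter r 1 b) (remove_letter r 2 c) r' j =
          G (remove_letter r 0 a) (remove_letter r 1 b) (remove_letter r 2 c) r' j"
        using less.hyps by blast
    qed
    also have "\<dots> = G a b c r i"
      using rec[of a b c r i] False less.prems by simp
    finally show ?thesis .
  qed
qed

lemma f_poly_three_rows:
  assumes "is_partition [a, b, c]"
  shows "f_poly [a, b, c] i = (\<Sum>r<3. yam_gf a b c r i)"
proof -
  have "f_poly [a, b, c] i = (\<Sum>w\<in>yamanouchi [a, b, c]. if card (word_descents w) = i then qvar ^ \<Sum>(word_descents w) else 0)"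
    by (simp add: f_poly_eq_sum_yamanouchi[OF assms] sum.inter_filter[OF finite_yamanouchi])
  also have "\<dots> = (\<Sum>w\<in>yamanouchi [a, b, c]. \<Sum>r<3. ending_weight r i w)"
  proof (rule sum.cong[OF refl])
    fix w assume w: "w \<in> yamanouchi [a, b, c]"
    have "a > 0" using assms by (simp add: is_partition_def)
    then have ne: "w \<noteq> []" using length_yamanouchi[OF w] by auto
    then have "last w < 3" using w last_in_set[of w] by (auto simp: yamanouchi3_iff)
    then have "(\<Sum>r<3. ending_weight r i w) = (\<Sum>r\<in>{last w}. ending_weight r i w)"
      by (intro sum.mono_neutral_cong_right) (auto simp: ending_weight_def)
    then show "(if card (word_descents w) = i then qvar ^ \<Sum>(word_descents w) else 0) = (\<Sum>r<3. ending_weight r i w)"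
      using ne by (simp add: ending_weight_def)
  qed
  also have "\<dots> = (\<Sum>r<3. yam_gf a b c r i)"
    unfolding yam_gf_def by (rule sum.swap)
  finally show ?thesis .
qed

section \<open>Polynomials as coefficient lists\<close>

fun coeffs_add :: "int list \<Rightarrow> int list \<Rightarrow> int list" where
  "coeffs_add [] ys = ys"
| "coeffs_add xs [] = xs"
| "coeffs_add (x # xs) (y # ys) = (x + y) # coeffs_add xs ys"

fun coeffs_mult :: "int list \<Rightarrow> int list \<Rightarrow> int list" where
  "coeffs_mult [] ys = []"
| "coeffs_mult (x # xs) ys = coeffs_add (map ((*) x) ys) (0 # coeffs_mult xs ys)"

definition coeffs_shift :: "nat \<Rightarrow> int list \<Rightarrow> int list" where
  "coeffs_shift k xs = replicate k 0 @ xs"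

lemma qvar_mult: "qvar * p = pCons 0 p"
  by (simp add: qvar_def)

lemma Poly_coeffs_add: "Poly (coeffs_add xs ys) = Poly xs + Poly ys"
  by (induction xs ys rule: coeffs_add.induct) auto

lemma Poly_coeffs_mult: "Poly (coeffs_mult xs ys) = Poly xs * Poly ys"
  by (induction xs) (auto simp: Poly_coeffs_add Poly_map)

lemma Poly_coeffs_shift: "Poly (coeffs_shift k xs) = qvar ^ k * Poly xs"
  by (induction k) (auto simp: coeffs_shift_def qvar_mult mult.assoc)

lemma Poly_strip_while: "Poly (strip_while ((=) 0) xs) = Poly xs"
  by (subst coeffs_eq_iff) (simp add: strip_while_idem)

text \<open>Polynomials in a second variable Y over Z[q], as lists of coefficient lists.\<close>

definition Poly2 :: "int list list \<Rightarrow> int poly poly" where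
  "Poly2 xss = Poly (map Poly xss)"

fun coeffs2_add :: "int list list \<Rightarrow> int list list \<Rightarrow> int list list" where
  "coeffs2_add [] ys = ys"
| "coeffs2_add xs [] = xs"
| "coeffs2_add (x # xs) (y # ys) = coeffs_add x y # coeffs2_add xs ys"

fun coeffs2_mult :: "int list list \<Rightarrow> int list list \<Rightarrow> int list list" where
  "coeffs2_mult [] ys = []"
| "coeffs2_mult (x # xs) ys = coeffs2_add (map (coeffs_mult x) ys) ([] # coeffs2_mult xs ys)"

text \<open>Substitution Y := q Y, multiplied by q^k.\<close>

fun coeffs2_dilate :: "nat \<Rightarrow> int list list \<Rightarrow> int list list" where
  "coeffs2_dilate k [] = []"
| "coeffs2_dilate k (x # xs) = coeffs_shift k x # coeffs2_dilate (Suc k) xs"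

definition strip2 :: "int list list \<Rightarrow> int list list" where
  "strip2 xss = strip_while ((=) []) (map (strip_while ((=) 0)) xss)"

lemma Poly2_Nil [simp]: "Poly2 [] = 0"
  by (simp add: Poly2_def)

lemma Poly2_Cons: "Poly2 (xs # xss) = pCons (Poly xs) (Poly2 xss)"
  by (simp add: Poly2_def)

lemma Poly2_coeffs2_add: "Poly2 (coeffs2_add xss yss) = Poly2 xss + Poly2 yss"
  by (induction xss yss rule: coeffs2_add.induct) (auto simp: Poly2_def Poly_coeffs_add)

lemma Poly2_map_coeffs_mult: "Poly2 (map (coeffs_mult xs) yss) = smult (Poly xs) (Poly2 yss)"
  by (induction yss) (auto simp: Poly2_def Poly_coeffs_mult)

lemma Poly2_coeffs2_mult: "Poly2 (coeffs2_mult xss yss) = Poly2 xss * Poly2 yss"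
  by (induction xss) (simp_all add: Poly2_coeffs2_add Poly2_map_coeffs_mult Poly2_Cons)

lemma Poly2_map_coeffs_shift: "Poly2 (map (coeffs_shift k) xss) = smult (qvar ^ k) (Poly2 xss)"
  by (induction xss) (auto simp: Poly2_def Poly_coeffs_shift)

lemma poly_Poly2_coeffs2_dilate:
  "poly (Poly2 (coeffs2_dilate k xss)) Y = qvar ^ k * poly (Poly2 xss) (qvar * Y)"
  by (induction xss arbitrary: k) (auto simp: Poly2_def Poly_coeffs_shift algebra_simps)

lemma poly_Poly2_one: "poly (Poly2 xss) 1 = Poly (foldr coeffs_add xss [])"
  by (induction xss) (simp_all add: Poly2_Cons Poly_coeffs_add)

lemma Poly2_strip2: "Poly2 (strip2 xss) = Poly2 xss"
proof -
  have "Poly (map Poly (strip_while ((=) []) yss)) = Poly (map Poly yss)" for yss :: "int list list"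
    by (induction yss rule: rev_induct) auto
  then show ?thesis
    unfolding strip2_def Poly2_def by (simp add: Poly_strip_while comp_def)
qed

lemma Poly2_eq_if_strip2_eq: "strip2 xss = strip2 yss \<Longrightarrow> Poly2 xss = Poly2 yss"
  by (metis Poly2_strip2)

lemma Poly_eq_if_strip_while_eq: "strip_while ((=) 0) xs = strip_while ((=) 0) ys \<Longrightarrow> Poly xs = Poly ys"
  by (metis Poly_strip_while)

section \<open>The certificate\<close>

definition one_minus_coeffs :: "nat \<Rightarrow> int list" where
  "one_minus_coeffs j = coeffs_add [1] (coeffs_shift j [-1])"

fun qpoch_coeffs :: "nat \<Rightarrow> int list" where
  "qpoch_coeffs 0 = [1]"
| "qpoch_coeffs (Suc k) = coeffs_mult (qpoch_coeffs k) (one_minus_coeffs (Suc k))"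

lemma Poly_one_minus_coeffs: "Poly (one_minus_coeffs j) = 1 - qvar ^ j"
  by (simp add: one_minus_coeffs_def Poly_coeffs_add Poly_coeffs_shift)

lemma Poly_qpoch_coeffs: "Poly (qpoch_coeffs k) = qpoch k"
  by (induction k) (simp_all add: qpoch_Suc Poly_coeffs_mult Poly_one_minus_coeffs)

text \<open>A certificate for the values (q)_4 (q)_3 yam_gf a b c r i with b, c \<le> 3. For a \<ge> 3 the value
  is a polynomial in Y = q^(a-3) over Z[q], whose coefficient lists cert_large gives for the key
  (b, c, r, i); cert_small gives the values for a \<le> 2 under (a, b, c, r, i). The tables are
  if-chains rather than lists so that the simplifier only evaluates the entry it selects.\<close>

definition cert_large :: "nat \<times> nat \<times> nat \<times> nat \<Rightarrow> int list list" where
  "cert_large = (\<lambda>(b, c, r, i).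
     if (b, c) = (0, 0) then (
       if (r, i) = (0, 0) then [[1, -2, -1, 2, 2, 2, -5, -2, 0, 2, 5, -2, -2, -2, 1, 2, -1]] else
       []) else
     if (b, c) = (1, 0) then (
       if (r, i) = (0, 1) then [[0, 1, -1, -2, 0, 2, 4, -1, -3, -3, -1, 4, 2, 0, -2, -1, 1], [0, 0, 0, -1, 1, 2, 0, -2, -4, 1, 3, 3, 1, -4, -2, 0, 2, 1, -1]] else
       if (r, i) = (1, 1) then [[], [0, 0, 0, 1, -2, -1, 2, 2, 2, -5, -2, 0, 2, 5, -2, -2, -2, 1, 2, -1]] else
       []) else
     if (b, c) = (1, 1) then (
       if (r, i) = (0, 2) then [[0, 0, 0, 1, -1, -1, -1, 1, 3, 0, 0, -3, -1, 1, 1, 1, -1], [0, 0, 0, 0, 0, -1, 0, 2, 2, 0, -4, -3, 0, 3, 4, 0, -2, -2, 0, 1], [0, 0, 0, 0, 0, 0, 0, 0, 1, -1, -1, -1, 1, 3, 0, 0, -3, -1, 1, 1, 1, -1]] else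
       if (r, i) = (2, 2) then [[], [0, 0, 0, 0, 0, 1, -1, -2, 0, 2, 4, -1, -3, -3, -1, 4, 2, 0, -2, -1, 1], [0, 0, 0, 0, 0, 0, 0, 0, -1, 1, 2, 0, -2, -4, 1, 3, 3, 1, -4, -2, 0, 2, 1, -1]] else
       []) else
     if (b, c) = (2, 0) then (
       if (r, i) = (0, 1) then [[0, 0, 1, -1, -2, 0, 2, 4, -1, -3, -3, -1, 4, 2, 0, -2, -1, 1], [0, 0, 0, -1, 1, 2, 0, -2, -4, 1, 3, 3, 1, -4, -2, 0, 2, 1, -1]] else
       if (r, i) = (0, 2) then [[0, 0, 0, 0, 1, -1, -1, -1, 1, 3, 0, 0, -3, -1, 1, 1, 1, -1], [0, 0, 0, 0, 0, -1, 0, 2, 2, 0, -4, -3, 0, 3, 4, 0, -2, -2, 0, 1], [0, 0, 0, 0, 0, 0, 0, 1, -1, -1, -1, 1, 3, 0, 0, -3, -1, 1, 1, 1, -1]] else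
       if (r, i) = (1, 1) then [[], [0, 0, 0, 1, -2, -1, 2, 2, 2, -5, -2, 0, 2, 5, -2, -2, -2, 1, 2, -1]] else
       if (r, i) = (1, 2) then [[], [0, 0, 0, 0, 0, 1, -1, -2, 0, 2, 4, -1, -3, -3, -1, 4, 2, 0, -2, -1, 1], [0, 0, 0, 0, 0, 0, 0, -1, 1, 2, 0, -2, -4, 1, 3, 3, 1, -4, -2, 0, 2, 1, -1]] else
       []) else
     if (b, c) = (2, 1) then (
       if (r, i) = (0, 2) then [[0, 0, 0, 0, 1, 0, -2, -2, 0, 4, 3, 0, -3, -4, 0, 2, 2, 0, -1], [0, 0, 0, 0, 0, -1, 0, 1, 2, 2, -2, -3, -4, 0, 4, 3, 2, -2, -2, -1, 0, 1], [0, 0, 0, 0, 0, 0, 0, 0, 1, 0, -2, -2, 0, 4, 3, 0, -3, -4, 0, 2, 2, 0, -1]] else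
       if (r, i) = (0, 3) then [[0, 0, 0, 0, 0, 0, 0, 1, 0, -2, -1, 0, 2, 2, 0, -1, -2, 0, 1], [0, 0, 0, 0, 0, 0, 0, 0, -1, -1, 1, 3, 3, -1, -4, -4, -1, 3, 3, 1, -1, -1], [0, 0, 0, 0, 0, 0, 0, 0, 0, 0, 1, 1, -1, -3, -3, 1, 4, 4, 1, -3, -3, -1, 1, 1], [0, 0, 0, 0, 0, 0, 0, 0, 0, 0, 0, 0, 0, -1, 0, 2, 1, 0, -2, -2, 0, 1, 2, 0, -1]] else
       if (r, i) = (1, 2) then [[], [0, 0, 0, 0, 0, 1, -1, -2, 0, 2, 4, -1, -3, -3, -1, 4, 2, 0, -2, -1, 1], [0, 0, 0, 0, 0, 0, 0, 0, -1, 1, 2, 0, -2, -4, 1, 3, 3, 1, -4, -2, 0, 2, 1, -1]] else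
       if (r, i) = (1, 3) then [[], [0, 0, 0, 0, 0, 0, 0, 0, 1, -1, -1, -1, 1, 3, 0, 0, -3, -1, 1, 1, 1, -1], [0, 0, 0, 0, 0, 0, 0, 0, 0, 0, -1, 0, 2, 2, 0, -4, -3, 0, 3, 4, 0, -2, -2, 0, 1], [0, 0, 0, 0, 0, 0, 0, 0, 0, 0, 0, 0, 0, 1, -1, -1, -1, 1, 3, 0, 0, -3, -1, 1, 1, 1, -1]] else
       if (r, i) = (2, 2) then [[], [0, 0, 0, 0, 0, 0, 0, 1, -1, -2, 0, 2, 4, -1, -3, -3, -1, 4, 2, 0, -2, -1, 1], [0, 0, 0, 0, 0, 0, 0, 0, 0, -1, 1, 2, 0, -2, -4, 1, 3, 3, 1, -4, -2, 0, 2, 1, -1]] else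
       if (r, i) = (2, 3) then [[], [0, 0, 0, 0, 0, 0, 0, 0, 0, 1, -1, -1, -1, 1, 3, 0, 0, -3, -1, 1, 1, 1, -1], [0, 0, 0, 0, 0, 0, 0, 0, 0, 0, 0, -1, 0, 2, 2, 0, -4, -3, 0, 3, 4, 0, -2, -2, 0, 1], [0, 0, 0, 0, 0, 0, 0, 0, 0, 0, 0, 0, 0, 0, 1, -1, -1, -1, 1, 3, 0, 0, -3, -1, 1, 1, 1, -1]] else
       []) else
     if (b, c) = (2, 2) then (
       if (r, i) = (0, 2) then [[0, 0, 0, 0, 0, 0, 1, -1, -1, -1, 1, 3, 0, 0, -3, -1, 1, 1, 1, -1], [0, 0, 0, 0, 0, 0, 0, -1, 0, 2, 2, 0, -4, -3, 0, 3, 4, 0, -2, -2, 0, 1], [0, 0, 0, 0, 0, 0, 0, 0, 0, 1, -1, -1, -1, 1, 3, 0, 0, -3, -1, 1, 1, 1, -1]] else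
       if (r, i) = (0, 3) then [[0, 0, 0, 0, 0, 0, 0, 0, 1, 0, -1, -2, -1, 2, 2, 2, -1, -2, -1, 0, 1], [0, 0, 0, 0, 0, 0, 0, 0, 0, -1, -1, 0, 3, 4, 1, -3, -6, -3, 1, 4, 3, 0, -1, -1], [0, 0, 0, 0, 0, 0, 0, 0, 0, 0, 0, 1, 1, 0, -3, -4, -1, 3, 6, 3, -1, -4, -3, 0, 1, 1], [0, 0, 0, 0, 0, 0, 0, 0, 0, 0, 0, 0, 0, 0, -1, 0, 1, 2, 1, -2, -2, -2, 1, 2, 1, 0, -1]] else
       if (r, i) = (0, 4) then [[0, 0, 0, 0, 0, 0, 0, 0, 0, 0, 0, 0, 1, -1, 0, -1, 0, 1, 0, 1, -1], [0, 0, 0, 0, 0, 0, 0, 0, 0, 0, 0, 0, 0, -1, -1, 1, 2, 2, 0, -2, -2, -1, 1, 1], [0, 0, 0, 0, 0, 0, 0, 0, 0, 0, 0, 0, 0, 0, 0, 2, 0, 0, -4, -2, 0, 2, 4, 0, 0, -2], [0, 0, 0, 0, 0, 0, 0, 0, 0, 0, 0, 0, 0, 0, 0, 0, 0, -1, -1, 1, 2, 2, 0, -2, -2, -1, 1, 1], [0, 0, 0, 0, 0, 0, 0, 0, 0, 0, 0, 0, 0, 0, 0, 0, 0, 0, 0, 0, 1, -1, 0, -1, 0, 1, 0, 1, -1]] else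
       if (r, i) = (2, 2) then [[], [0, 0, 0, 0, 0, 0, 0, 1, -1, -2, 0, 2, 4, -1, -3, -3, -1, 4, 2, 0, -2, -1, 1], [0, 0, 0, 0, 0, 0, 0, 0, 0, -1, 1, 2, 0, -2, -4, 1, 3, 3, 1, -4, -2, 0, 2, 1, -1]] else
       if (r, i) = (2, 3) then [[], [0, 0, 0, 0, 0, 0, 0, 0, 0, 1, 0, -1, -3, -1, 3, 4, 3, -3, -4, -3, 1, 3, 1, 0, -1], [0, 0, 0, 0, 0, 0, 0, 0, 0, 0, 0, -1, -1, 1, 4, 4, -2, -7, -7, 0, 7, 7, 2, -4, -4, -1, 1, 1], [0, 0, 0, 0, 0, 0, 0, 0, 0, 0, 0, 0, 0, 0, 1, 0, -1, -3, -1, 3, 4, 3, -3, -4, -3, 1, 3, 1, 0, -1]] else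
       if (r, i) = (2, 4) then [[], [0, 0, 0, 0, 0, 0, 0, 0, 0, 0, 0, 0, 0, 1, 0, -2, -1, 0, 2, 2, 0, -1, -2, 0, 1], [0, 0, 0, 0, 0, 0, 0, 0, 0, 0, 0, 0, 0, 0, 0, -2, 0, 2, 4, 2, -4, -4, -4, 2, 4, 2, 0, -2], [0, 0, 0, 0, 0, 0, 0, 0, 0, 0, 0, 0, 0, 0, 0, 0, 0, 1, 1, -1, -3, -3, 1, 4, 4, 1, -3, -3, -1, 1, 1], [0, 0, 0, 0, 0, 0, 0, 0, 0, 0, 0, 0, 0, 0, 0, 0, 0, 0, 0, 0, -1, 1, 0, 1, 1, -2, 0, -2, 1, 1, 0, 1, -1]] else
       []) else
     if (b, c) = (3, 0) then (
       if (r, i) = (0, 1) then [[0, 0, 0, 1, -1, -2, 0, 2, 4, -1, -3, -3, -1, 4, 2, 0, -2, -1, 1], [0, 0, 0, -1, 1, 2, 0, -2, -4, 1, 3, 3, 1, -4, -2, 0, 2, 1, -1]] else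
       if (r, i) = (0, 2) then [[0, 0, 0, 0, 0, 1, 0, -2, -2, 0, 4, 3, 0, -3, -4, 0, 2, 2, 0, -1], [0, 0, 0, 0, 0, -1, 0, 1, 2, 2, -2, -3, -4, 0, 4, 3, 2, -2, -2, -1, 0, 1], [0, 0, 0, 0, 0, 0, 0, 1, 0, -2, -2, 0, 4, 3, 0, -3, -4, 0, 2, 2, 0, -1]] else
       if (r, i) = (0, 3) then [[0, 0, 0, 0, 0, 0, 0, 0, 0, 1, -1, -1, 0, 0, 2, 0, 0, -1, -1, 1], [0, 0, 0, 0, 0, 0, 0, 0, 0, -1, 0, 1, 2, 1, -2, -2, -2, 1, 2, 1, 0, -1], [0, 0, 0, 0, 0, 0, 0, 0, 0, 0, 1, 0, -1, -2, -1, 2, 2, 2, -1, -2, -1, 0, 1], [0, 0, 0, 0, 0, 0, 0, 0, 0, 0, 0, 0, -1, 1, 1, 0, 0, -2, 0, 0, 1, 1, -1]] else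
       if (r, i) = (1, 1) then [[], [0, 0, 0, 1, -2, -1, 2, 2, 2, -5, -2, 0, 2, 5, -2, -2, -2, 1, 2, -1]] else
       if (r, i) = (1, 2) then [[], [0, 0, 0, 0, 0, 1, -1, -1, -1, 0, 4, 1, 1, -4, -4, 1, 1, 4, 0, -1, -1, -1, 1], [0, 0, 0, 0, 0, 0, 0, -1, 0, 3, 2, -2, -6, -3, 4, 6, 4, -3, -6, -2, 2, 3, 0, -1]] else
       if (r, i) = (1, 3) then [[], [0, 0, 0, 0, 0, 0, 0, 0, 0, 1, -1, -1, -1, 1, 3, 0, 0, -3, -1, 1, 1, 1, -1], [0, 0, 0, 0, 0, 0, 0, 0, 0, 0, -1, 0, 2, 2, 0, -4, -3, 0, 3, 4, 0, -2, -2, 0, 1], [0, 0, 0, 0, 0, 0, 0, 0, 0, 0, 0, 0, 1, -1, -1, -1, 1, 3, 0, 0, -3, -1, 1, 1, 1, -1]] else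
       []) else
     if (b, c) = (3, 1) then (
       if (r, i) = (0, 2) then [[0, 0, 0, 0, 0, 1, 0, -1, -3, -1, 3, 4, 3, -3, -4, -3, 1, 3, 1, 0, -1], [0, 0, 0, 0, 0, -1, 0, 1, 2, 1, -2, -1, -2, 0, 0, 0, 2, 1, 2, -1, -2, -1, 0, 1], [0, 0, 0, 0, 0, 0, 0, 0, 1, 0, -1, -3, -1, 3, 4, 3, -3, -4, -3, 1, 3, 1, 0, -1]] else
       if (r, i) = (0, 3) then [[0, 0, 0, 0, 0, 0, 0, 0, 1, 1, -1, -3, -3, 1, 4, 4, 1, -3, -3, -1, 1, 1], [0, 0, 0, 0, 0, 0, 0, 0, -1, -1, 0, 1, 3, 3, 2, -2, -6, -5, -2, 3, 5, 3, 0, -2, -1], [0, 0, 0, 0, 0, 0, 0, 0, 0, 0, 1, 2, 0, -3, -5, -3, 2, 5, 6, 2, -2, -3, -3, -1, 0, 1, 1], [0, 0, 0, 0, 0, 0, 0, 0, 0, 0, 0, 0, 0, -1, -1, 1, 3, 3, -1, -4, -4, -1, 3, 3, 1, -1, -1]] else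
       if (r, i) = (0, 4) then [[0, 0, 0, 0, 0, 0, 0, 0, 0, 0, 0, 0, 0, 1, 0, -1, -2, 0, 2, 1, 0, -1], [0, 0, 0, 0, 0, 0, 0, 0, 0, 0, 0, 0, 0, -1, -1, 0, 2, 3, 1, -1, -3, -2, 0, 1, 1], [0, 0, 0, 0, 0, 0, 0, 0, 0, 0, 0, 0, 0, 0, 1, 1, 1, -2, -3, -3, 0, 3, 3, 2, -1, -1, -1], [0, 0, 0, 0, 0, 0, 0, 0, 0, 0, 0, 0, 0, 0, 0, 0, -1, -1, 0, 2, 3, 1, -1, -3, -2, 0, 1, 1], [0, 0, 0, 0, 0, 0, 0, 0, 0, 0, 0, 0, 0, 0, 0, 0, 0, 0, 0, 1, 0, -1, -2, 0, 2, 1, 0, -1]] else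
       if (r, i) = (1, 2) then [[], [0, 0, 0, 0, 0, 1, -1, -1, -1, 0, 4, 1, 1, -4, -4, 1, 1, 4, 0, -1, -1, -1, 1], [0, 0, 0, 0, 0, 0, 0, 0, -1, 0, 3, 2, -2, -6, -3, 4, 6, 4, -3, -6, -2, 2, 3, 0, -1]] else
       if (r, i) = (1, 3) then [[], [0, 0, 0, 0, 0, 0, 0, 0, 1, 0, -1, -2, -2, 2, 3, 4, 0, -4, -3, -2, 2, 2, 1, 0, -1], [0, 0, 0, 0, 0, 0, 0, 0, 0, 0, -1, -2, 2, 5, 4, -2, -9, -6, -1, 7, 8, 1, -2, -4, -1, 0, 0, 1], [0, 0, 0, 0, 0, 0, 0, 0, 0, 0, 0, 0, 0, 1, 1, -2, -4, -2, 4, 7, 3, -3, -7, -4, 2, 4, 2, -1, -1]] else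
       if (r, i) = (1, 4) then [[], [0, 0, 0, 0, 0, 0, 0, 0, 0, 0, 0, 0, 0, 1, 0, -2, -1, 0, 2, 2, 0, -1, -2, 0, 1], [0, 0, 0, 0, 0, 0, 0, 0, 0, 0, 0, 0, 0, 0, -1, -1, 1, 3, 3, -1, -4, -4, -1, 3, 3, 1, -1, -1], [0, 0, 0, 0, 0, 0, 0, 0, 0, 0, 0, 0, 0, 0, 0, 0, 1, 1, -1, -3, -3, 1, 4, 4, 1, -3, -3, -1, 1, 1], [0, 0, 0, 0, 0, 0, 0, 0, 0, 0, 0, 0, 0, 0, 0, 0, 0, 0, 0, -1, 0, 2, 1, 0, -2, -2, 0, 1, 2, 0, -1]] else
       if (r, i) = (2, 2) then [[], [0, 0, 0, 0, 0, 0, 0, 0, 0, 1, -1, -2, 0, 2, 4, -1, -3, -3, -1, 4, 2, 0, -2, -1, 1], [0, 0, 0, 0, 0, 0, 0, 0, 0, 0, -1, 1, 2, 0, -2, -4, 1, 3, 3, 1, -4, -2, 0, 2, 1, -1]] else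
       if (r, i) = (2, 3) then [[], [0, 0, 0, 0, 0, 0, 0, 0, 0, 0, 0, 1, 0, -2, -2, 0, 4, 3, 0, -3, -4, 0, 2, 2, 0, -1], [0, 0, 0, 0, 0, 0, 0, 0, 0, 0, 0, 0, -1, 0, 1, 2, 2, -2, -3, -4, 0, 4, 3, 2, -2, -2, -1, 0, 1], [0, 0, 0, 0, 0, 0, 0, 0, 0, 0, 0, 0, 0, 0, 0, 1, 0, -2, -2, 0, 4, 3, 0, -3, -4, 0, 2, 2, 0, -1]] else
       if (r, i) = (2, 4) then [[], [0, 0, 0, 0, 0, 0, 0, 0, 0, 0, 0, 0, 0, 0, 0, 1, -1, -1, 0, 0, 2, 0, 0, -1, -1, 1], [0, 0, 0, 0, 0, 0, 0, 0, 0, 0, 0, 0, 0, 0, 0, 0, -1, 0, 1, 2, 1, -2, -2, -2, 1, 2, 1, 0, -1], [0, 0, 0, 0, 0, 0, 0, 0, 0, 0, 0, 0, 0, 0, 0, 0, 0, 0, 1, 0, -1, -2, -1, 2, 2, 2, -1, -2, -1, 0, 1], [0, 0, 0, 0, 0, 0, 0, 0, 0, 0, 0, 0, 0, 0, 0, 0, 0, 0, 0, 0, 0, -1, 1, 1, 0, 0, -2, 0, 0, 1, 1, -1]] else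
       []) else
     if (b, c) = (3, 2) then (
       if (r, i) = (0, 2) then [[0, 0, 0, 0, 0, 0, 0, 1, 0, -2, -2, 0, 4, 3, 0, -3, -4, 0, 2, 2, 0, -1], [0, 0, 0, 0, 0, 0, 0, -1, 0, 1, 2, 2, -2, -3, -4, 0, 4, 3, 2, -2, -2, -1, 0, 1], [0, 0, 0, 0, 0, 0, 0, 0, 0, 1, 0, -2, -2, 0, 4, 3, 0, -3, -4, 0, 2, 2, 0, -1]] else
       if (r, i) = (0, 3) then [[0, 0, 0, 0, 0, 0, 0, 0, 0, 1, 1, 0, -3, -4, -1, 3, 6, 3, -1, -4, -3, 0, 1, 1], [0, 0, 0, 0, 0, 0, 0, 0, 0, -1, -1, -1, 1, 3, 4, 4, -1, -5, -8, -5, 1, 5, 6, 2, -1, -2, -1], [0, 0, 0, 0, 0, 0, 0, 0, 0, 0, 0, 1, 2, 1, -2, -6, -5, -1, 5, 8, 5, 1, -4, -4, -3, -1, 1, 1, 1], [0, 0, 0, 0, 0, 0, 0, 0, 0, 0, 0, 0, 0, 0, -1, -1, 0, 3, 4, 1, -3, -6, -3, 1, 4, 3, 0, -1, -1]] else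
       if (r, i) = (0, 4) then [[0, 0, 0, 0, 0, 0, 0, 0, 0, 0, 0, 0, 0, 1, 1, 0, -2, -3, -1, 1, 3, 2, 0, -1, -1], [0, 0, 0, 0, 0, 0, 0, 0, 0, 0, 0, 0, 0, -1, -1, -2, -1, 2, 5, 7, 2, -3, -7, -6, -1, 2, 3, 1], [0, 0, 0, 0, 0, 0, 0, 0, 0, 0, 0, 0, 0, 0, 0, 2, 3, 2, -1, -6, -7, -6, 0, 6, 7, 6, 1, -2, -3, -2], [0, 0, 0, 0, 0, 0, 0, 0, 0, 0, 0, 0, 0, 0, 0, 0, 0, -1, -3, -2, 1, 6, 7, 3, -2, -7, -5, -2, 1, 2, 1, 1], [0, 0, 0, 0, 0, 0, 0, 0, 0, 0, 0, 0, 0, 0, 0, 0, 0, 0, 0, 0, 1, 1, 0, -2, -3, -1, 1, 3, 2, 0, -1, -1]] else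
       if (r, i) = (0, 5) then [[0, 0, 0, 0, 0, 0, 0, 0, 0, 0, 0, 0, 0, 0, 0, 0, 0, 0, 0, 1, 0, -1, -1, 0, 1], [0, 0, 0, 0, 0, 0, 0, 0, 0, 0, 0, 0, 0, 0, 0, 0, 0, 0, 0, -1, -1, -1, 1, 3, 2, 0, -2, -1], [0, 0, 0, 0, 0, 0, 0, 0, 0, 0, 0, 0, 0, 0, 0, 0, 0, 0, 0, 0, 1, 2, 2, -1, -3, -4, -2, 1, 2, 2], [0, 0, 0, 0, 0, 0, 0, 0, 0, 0, 0, 0, 0, 0, 0, 0, 0, 0, 0, 0, 0, 0, -2, -2, -1, 2, 4, 3, 1, -2, -2, -1], [0, 0, 0, 0, 0, 0, 0, 0, 0, 0, 0, 0, 0, 0, 0, 0, 0, 0, 0, 0, 0, 0, 0, 0, 1, 2, 0, -2, -3, -1, 1, 1, 1], [0, 0, 0, 0, 0, 0, 0, 0, 0, 0, 0, 0, 0, 0, 0, 0, 0, 0, 0, 0, 0, 0, 0, 0, 0, 0, 0, -1, 0, 1, 1, 0, -1]] else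
       if (r, i) = (1, 2) then [[], [0, 0, 0, 0, 0, 0, 0, 1, -1, -2, 0, 2, 4, -1, -3, -3, -1, 4, 2, 0, -2, -1, 1], [0, 0, 0, 0, 0, 0, 0, 0, 0, -1, 1, 2, 0, -2, -4, 1, 3, 3, 1, -4, -2, 0, 2, 1, -1]] else
       if (r, i) = (1, 3) then [[], [0, 0, 0, 0, 0, 0, 0, 0, 0, 1, 0, -1, -3, 0, 2, 3, 2, -2, -1, -3, 1, 0, 0, 1, 0, 1, -1], [0, 0, 0, 0, 0, 0, 0, 0, 0, 0, 0, -1, -1, 1, 3, 4, 0, -5, -7, -4, 4, 7, 5, 0, -4, -3, -1, 1, 1], [0, 0, 0, 0, 0, 0, 0, 0, 0, 0, 0, 0, 0, 0, 1, 0, 0, -4, -2, 2, 5, 6, -3, -4, -6, 0, 4, 2, 1, -2]] else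
       if (r, i) = (1, 4) then [[], [0, 0, 0, 0, 0, 0, 0, 0, 0, 0, 0, 0, 0, 1, 0, -1, -1, -1, 0, 1, 2, 1, 0, -1, -1, -1, 0, 1], [0, 0, 0, 0, 0, 0, 0, 0, 0, 0, 0, 0, 0, 0, 0, -2, -1, 1, 4, 5, 0, -3, -7, -4, 1, 3, 4, 1, 0, -1, -1], [0, 0, 0, 0, 0, 0, 0, 0, 0, 0, 0, 0, 0, 0, 0, 0, 0, 1, 2, 0, -3, -6, -3, 3, 7, 7, 0, -4, -5, -2, 1, 1, 1], [0, 0, 0, 0, 0, 0, 0, 0, 0, 0, 0, 0, 0, 0, 0, 0, 0, 0, 0, 0, -1, 0, 0, 2, 3, -1, -2, -4, -1, 2, 2, 2, -1, -1]] else
       if (r, i) = (1, 5) then [[], [0, 0, 0, 0, 0, 0, 0, 0, 0, 0, 0, 0, 0, 0, 0, 0, 0, 0, 0, 1, -1, 0, -1, 0, 1, 0, 1, -1], [0, 0, 0, 0, 0, 0, 0, 0, 0, 0, 0, 0, 0, 0, 0, 0, 0, 0, 0, 0, -1, -1, 1, 2, 2, 0, -2, -2, -1, 1, 1], [0, 0, 0, 0, 0, 0, 0, 0, 0, 0, 0, 0, 0, 0, 0, 0, 0, 0, 0, 0, 0, 0, 2, 0, 0, -4, -2, 0, 2, 4, 0, 0, -2], [0, 0, 0, 0, 0, 0, 0, 0, 0, 0, 0, 0, 0, 0, 0, 0, 0, 0, 0, 0, 0, 0, 0, 0, -1, -1, 1, 2, 2, 0, -2, -2, -1, 1, 1], [0,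 0, 0, 0, 0, 0, 0, 0, 0, 0, 0, 0, 0, 0, 0, 0, 0, 0, 0, 0, 0, 0, 0, 0, 0, 0, 0, 1, -1, 0, -1, 0, 1, 0, 1, -1]] else
       if (r, i) = (2, 2) then [[], [0, 0, 0, 0, 0, 0, 0, 0, 0, 1, -1, -2, 0, 2, 4, -1, -3, -3, -1, 4, 2, 0, -2, -1, 1], [0, 0, 0, 0, 0, 0, 0, 0, 0, 0, -1, 1, 2, 0, -2, -4, 1, 3, 3, 1, -4, -2, 0, 2, 1, -1]] else
       if (r, i) = (2, 3) then [[], [0, 0, 0, 0, 0, 0, 0, 0, 0, 0, 0, 1, 1, -2, -3, -3, 3, 6, 4, 0, -7, -4, -1, 3, 3, 0, 0, -1], [0, 0, 0, 0, 0, 0, 0, 0, 0, 0, 0, 0, -1, -1, 1, 3, 3, 0, -3, -5, -4, 0, 4, 5, 3, 0, -3, -3, -1, 1, 1], [0, 0, 0, 0, 0, 0, 0, 0, 0, 0, 0, 0, 0, 0, 0, 1, 0, 0, -3, -3, 1, 4, 7, 0, -4, -6, -3, 3, 3, 2, -1, -1]] else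
       if (r, i) = (2, 4) then [[], [0, 0, 0, 0, 0, 0, 0, 0, 0, 0, 0, 0, 0, 0, 0, 2, 0, -2, -3, -3, 3, 4, 4, 0, -4, -2, -1, 1, 1], [0, 0, 0, 0, 0, 0, 0, 0, 0, 0, 0, 0, 0, 0, 0, 0, -2, -1, 0, 3, 6, 3, 0, -8, -8, -3, 2, 7, 4, 1, -2, -2], [0, 0, 0, 0, 0, 0, 0, 0, 0, 0, 0, 0, 0, 0, 0, 0, 0, 0, 1, 2, 1, -3, -6, -5, 1, 7, 8, 4, -3, -5, -4, -1, 1, 1, 1], [0, 0, 0, 0, 0, 0, 0, 0, 0, 0, 0, 0, 0, 0, 0, 0, 0, 0, 0, 0, 0, -1, 0, 0, 1, 3, 1, -1, -4, -3, 0, 2, 3, 1, -1, -1]] else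
       if (r, i) = (2, 5) then [[], [0, 0, 0, 0, 0, 0, 0, 0, 0, 0, 0, 0, 0, 0, 0, 0, 0, 0, 0, 0, 1, 0, -1, -2, 0, 2, 1, 0, -1], [0, 0, 0, 0, 0, 0, 0, 0, 0, 0, 0, 0, 0, 0, 0, 0, 0, 0, 0, 0, 0, -1, -2, 1, 3, 3, 1, -3, -3, -2, 1, 2], [0, 0, 0, 0, 0, 0, 0, 0, 0, 0, 0, 0, 0, 0, 0, 0, 0, 0, 0, 0, 0, 0, 0, 2, 1, 0, -4, -4, -1, 2, 5, 2, 0, -2, -1], [0, 0, 0, 0, 0, 0, 0, 0, 0, 0, 0, 0, 0, 0, 0, 0, 0, 0, 0, 0, 0, 0, 0, 0, 0, -1, -1, 0, 2, 3, 1, -1, -3, -2, 0, 1, 1], [0, 0, 0, 0, 0, 0, 0, 0, 0, 0, 0, 0, 0, 0, 0, 0, 0, 0, 0, 0, 0, 0, 0, 0, 0, 0, 0, 0, 1, -1, 0, 0, -1, 0, 0, 2, 0, -1]] else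
       []) else
     if (b, c) = (3, 3) then (
       if (r, i) = (0, 2) then [[0, 0, 0, 0, 0, 0, 0, 0, 0, 1, -1, -1, -1, 1, 3, 0, 0, -3, -1, 1, 1, 1, -1], [0, 0, 0, 0, 0, 0, 0, 0, 0, -1, 0, 2, 2, 0, -4, -3, 0, 3, 4, 0, -2, -2, 0, 1], [0, 0, 0, 0, 0, 0, 0, 0, 0, 0, 1, -1, -1, -1, 1, 3, 0, 0, -3, -1, 1, 1, 1, -1]] else
       if (r, i) = (0, 3) then [[0, 0, 0, 0, 0, 0, 0, 0, 0, 0, 0, 1, 1, -1, -3, -2, 0, 3, 4, 1, -1, -3, -1, 0, 0, 1], [0, 0, 0, 0, 0, 0, 0, 0, 0, 0, 0, -1, -2, 0, 3, 5, 2, -2, -4, -4, -1, 0, 1, 1, 2, 2, 0, -1, -1], [0, 0, 0, 0, 0, 0, 0, 0, 0, 0, 0, 0, 1, 1, 0, -2, -2, -1, -1, 0, 1, 4, 4, 2, -2, -5, -3, 0, 2, 1], [0, 0, 0, 0, 0, 0, 0, 0, 0, 0, 0, 0, 0, 0, 0, -1, 0, 0, 1, 3, 1, -1, -4, -3, 0, 2, 3, 1, -1, -1]] else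
       if (r, i) = (0, 4) then [[0, 0, 0, 0, 0, 0, 0, 0, 0, 0, 0, 0, 0, 0, 0, 2, 0, 0, -3, -2, -1, 1, 3, 1, 1, -1, 0, -1], [0, 0, 0, 0, 0, 0, 0, 0, 0, 0, 0, 0, 0, 0, 0, -2, -2, -1, 1, 4, 4, 4, 1, -2, -4, -5, -3, 0, 2, 2, 1], [0, 0, 0, 0, 0, 0, 0, 0, 0, 0, 0, 0, 0, 0, 0, 0, 2, 1, 3, 0, -1, -6, -7, -5, 0, 5, 7, 6, 1, 0, -3, -1, -2], [0, 0, 0, 0, 0, 0, 0, 0, 0, 0, 0, 0, 0, 0, 0, 0, 0, 0, -1, -2, -2, 0, 3, 5, 4, 2, -1, -4, -4, -4, -1, 1, 2, 2], [0, 0, 0, 0, 0, 0, 0, 0, 0, 0, 0, 0, 0, 0, 0, 0, 0, 0, 0, 0, 0, 1, 0, 1, -1, -1, -3, -1, 1, 2, 3, 0, 0, -2]] else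
       if (r, i) = (0, 5) then [[0, 0, 0, 0, 0, 0, 0, 0, 0, 0, 0, 0, 0, 0, 0, 0, 0, 0, 0, 0, 1, 1, -1, -1, -1, 0, 0, 0, 1], [0, 0, 0, 0, 0, 0, 0, 0, 0, 0, 0, 0, 0, 0, 0, 0, 0, 0, 0, 0, -1, -2, -2, 0, 2, 3, 3, 2, 0, -2, -2, -1], [0, 0, 0, 0, 0, 0, 0, 0, 0, 0, 0, 0, 0, 0, 0, 0, 0, 0, 0, 0, 0, 1, 3, 3, 2, -1, -4, -6, -5, -2, 1, 3, 3, 2], [0, 0, 0, 0, 0, 0, 0, 0, 0, 0, 0, 0, 0, 0, 0, 0, 0, 0, 0, 0, 0, 0, 0, -2, -3, -3, -1, 2, 5, 6, 4, 1, -2, -3, -3, -1], [0, 0, 0, 0, 0, 0, 0, 0, 0, 0, 0, 0, 0, 0, 0, 0, 0, 0, 0, 0, 0, 0, 0, 0, 0, 1, 2, 2, 0, -2, -3, -3, -2, 0, 2, 2, 1], [0, 0, 0, 0, 0, 0, 0, 0, 0, 0, 0, 0, 0, 0, 0, 0, 0, 0, 0, 0, 0, 0, 0, 0, 0, 0, 0, 0, -1, 0, 0, 0, 1, 1, 1, -1, -1]] else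
       if (r, i) = (0, 6) then [[0, 0, 0, 0, 0, 0, 0, 0, 0, 0, 0, 0, 0, 0, 0, 0, 0, 0, 0, 0, 0, 0, 0, 0, 0, 0, 0, 1, -1], [0, 0, 0, 0, 0, 0, 0, 0, 0, 0, 0, 0, 0, 0, 0, 0, 0, 0, 0, 0, 0, 0, 0, 0, 0, 0, 0, -1, -1, 0, 1, 1], [0, 0, 0, 0, 0, 0, 0, 0, 0, 0, 0, 0, 0, 0, 0, 0, 0, 0, 0, 0, 0, 0, 0, 0, 0, 0, 0, 0, 2, 1, 2, -2, -1, -2], [0, 0, 0, 0, 0, 0, 0, 0, 0, 0, 0, 0, 0, 0, 0, 0, 0, 0, 0, 0, 0, 0, 0, 0, 0, 0, 0, 0, 0, -1, -3, -1, 0, 1, 3, 1], [0, 0, 0, 0, 0, 0, 0, 0, 0, 0, 0, 0, 0, 0, 0, 0, 0, 0, 0, 0, 0, 0, 0, 0, 0, 0, 0, 0, 0, 0, 0, 2, 1, 2, -2, -1, -2], [0, 0, 0, 0, 0, 0, 0, 0, 0, 0, 0, 0, 0, 0, 0, 0, 0, 0, 0, 0, 0, 0, 0, 0, 0, 0, 0, 0, 0, 0, 0, 0, 0, -1, -1, 0, 1, 1], [0, 0, 0, 0, 0, 0, 0, 0, 0, 0, 0, 0, 0, 0, 0, 0, 0, 0, 0, 0, 0, 0, 0, 0, 0, 0, 0, 0, 0, 0, 0, 0, 0, 0, 0, 0, 1, -1]] else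
       if (r, i) = (2, 2) then [[], [0, 0, 0, 0, 0, 0, 0, 0, 0, 1, -1, -2, 0, 2, 4, -1, -3, -3, -1, 4, 2, 0, -2, -1, 1], [0, 0, 0, 0, 0, 0, 0, 0, 0, 0, -1, 1, 2, 0, -2, -4, 1, 3, 3, 1, -4, -2, 0, 2, 1, -1]] else
       if (r, i) = (2, 3) then [[], [0, 0, 0, 0, 0, 0, 0, 0, 0, 0, 0, 1, 1, -2, -3, -2, 3, 4, 2, 0, -3, -1, -1, 0, -1, 0, 2, 1, 0, -1], [0, 0, 0, 0, 0, 0, 0, 0, 0, 0, 0, 0, -1, -1, 1, 3, 2, -1, -1, -1, -2, -4, -3, 2, 6, 7, 1, -5, -5, -1, 2, 1], [0, 0, 0, 0, 0, 0, 0, 0, 0, 0, 0, 0, 0, 0, 0, 1, 0, 0, -2, -3, -1, 2, 7, 4, -1, -6, -6, -1, 3, 4, 1, -1, -1]] else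
       if (r, i) = (2, 4) then [[], [0, 0, 0, 0, 0, 0, 0, 0, 0, 0, 0, 0, 0, 0, 0, 2, 0, -1, -2, -3, 0, 0, 3, 3, 2, 1, -2, -3, -2, 0, 1, 1], [0, 0, 0, 0, 0, 0, 0, 0, 0, 0, 0, 0, 0, 0, 0, 0, -2, -1, -1, 1, 4, 6, 6, -1, -7, -10, -7, -1, 6, 6, 4, 1, -1, -1, -2], [0, 0, 0, 0, 0, 0, 0, 0, 0, 0, 0, 0, 0, 0, 0, 0, 0, 0, 1, 2, 2, -1, -5, -7, -4, 1, 6, 8, 6, 3, -3, -5, -6, -3, 1, 2, 2], [0, 0, 0, 0, 0, 0, 0, 0, 0, 0, 0, 0, 0, 0, 0, 0, 0, 0, 0, 0, 0, -1, 0, -1, 1, 2, 3, 2, -2, -3, -6, -1, 1, 4, 3, 0, 0, -2]] else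
       if (r, i) = (2, 5) then [[], [0, 0, 0, 0, 0, 0, 0, 0, 0, 0, 0, 0, 0, 0, 0, 0, 0, 0, 0, 0, 1, 1, 0, -2, -2, -1, 0, 1, 2, 2, 0, -1, -1], [0, 0, 0, 0, 0, 0, 0, 0, 0, 0, 0, 0, 0, 0, 0, 0, 0, 0, 0, 0, 0, -1, -3, -2, 1, 4, 6, 5, 1, -4, -6, -5, -2, 1, 3, 2], [0, 0, 0, 0, 0, 0, 0, 0, 0, 0, 0, 0, 0, 0, 0, 0, 0, 0, 0, 0, 0, 0, 0, 2, 3, 3, -1, -5, -8, -7, -2, 4, 8, 7, 4, -1, -3, -3, -1], [0, 0, 0, 0, 0, 0, 0, 0, 0, 0, 0, 0, 0, 0, 0, 0, 0, 0, 0, 0, 0, 0, 0, 0, 0, -1, -2, -2, 0, 3, 5, 5, 2, -2, -5, -5, -3, 0, 2, 2, 1], [0, 0, 0, 0, 0, 0, 0, 0, 0, 0, 0, 0, 0, 0, 0, 0, 0, 0, 0, 0, 0, 0, 0, 0, 0, 0, 0, 0, 1, 0, 0, 0, -1, -2, -1, 1, 1, 1, 1, 1, -1, -1]] else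
       if (r, i) = (2, 6) then [[], [0, 0, 0, 0, 0, 0, 0, 0, 0, 0, 0, 0, 0, 0, 0, 0, 0, 0, 0, 0, 0, 0, 0, 0, 0, 0, 0, 1, 0, -1, -1, 0, 1], [0, 0, 0, 0, 0, 0, 0, 0, 0, 0, 0, 0, 0, 0, 0, 0, 0, 0, 0, 0, 0, 0, 0, 0, 0, 0, 0, 0, -2, -1, 0, 3, 3, 0, -1, -2], [0, 0, 0, 0, 0, 0, 0, 0, 0, 0, 0, 0, 0, 0, 0, 0, 0, 0, 0, 0, 0, 0, 0, 0, 0, 0, 0, 0, 0, 1, 3, 1, -1, -4, -4, -1, 1, 3, 1], [0, 0, 0, 0, 0, 0, 0, 0, 0, 0, 0, 0, 0, 0, 0, 0, 0, 0, 0, 0, 0, 0, 0, 0, 0, 0, 0, 0, 0, 0, 0, -2, -1, -2, 2, 3, 3, 2, -2, -1, -2], [0, 0, 0, 0, 0, 0, 0, 0, 0, 0, 0, 0, 0, 0, 0, 0, 0, 0, 0, 0, 0, 0, 0, 0, 0, 0, 0, 0, 0, 0, 0, 0, 0, 1, 1, 0, -1, -1, -1, -1, 0, 1, 1], [0, 0, 0, 0, 0, 0, 0, 0, 0, 0, 0, 0, 0, 0, 0, 0, 0, 0, 0, 0, 0, 0, 0, 0, 0, 0, 0, 0, 0, 0, 0, 0, 0, 0, 0, 0, -1, 1, 0, 0, 0, 0, 1, -1]] else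
       []) else
     [])"

definition cert_small :: "nat \<times> nat \<times> nat \<times> nat \<times> nat \<Rightarrow> int list" where
  "cert_small = (\<lambda>(a, b, c, r, i).
     if (a, b, c) = (1, 0, 0) then (
       if (r, i) = (0, 0) then [1, -2, -1, 2, 2, 2, -5, -2, 0, 2, 5, -2, -2, -2, 1, 2, -1] else
       []) else
     if (a, b, c) = (1, 1, 0) then (
       if (r, i) = (1, 1) then [0, 1, -2, -1, 2, 2, 2, -5, -2, 0, 2, 5, -2, -2, -2, 1, 2, -1] else
       []) else
     if (a, b, c) = (1, 1, 1) then (
       if (r, i) = (2, 2) then [0, 0, 0, 1, -2, -1, 2, 2, 2, -5, -2, 0, 2, 5, -2, -2, -2, 1, 2, -1] else
       []) else
     if (a, b, c) = (2, 0, 0) then (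
       if (r, i) = (0, 0) then [1, -2, -1, 2, 2, 2, -5, -2, 0, 2, 5, -2, -2, -2, 1, 2, -1] else
       []) else
     if (a, b, c) = (2, 1, 0) then (
       if (r, i) = (0, 1) then [0, 1, -2, -1, 2, 2, 2, -5, -2, 0, 2, 5, -2, -2, -2, 1, 2, -1] else
       if (r, i) = (1, 1) then [0, 0, 1, -2, -1, 2, 2, 2, -5, -2, 0, 2, 5, -2, -2, -2, 1, 2, -1] else
       []) else
     if (a, b, c) = (2, 1, 1) then (
       if (r, i) = (0, 2) then [0, 0, 0, 1, -2, -1, 2, 2, 2, -5, -2, 0, 2, 5, -2, -2, -2, 1, 2, -1] else
       if (r, i) = (2, 2) then [0, 0, 0, 0, 1, -1, -3, 1, 4, 4, -3, -7, -2, 2, 7, 3, -4, -4, -1, 3, 1, -1] else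
       []) else
     if (a, b, c) = (2, 2, 0) then (
       if (r, i) = (1, 1) then [0, 0, 1, -2, -1, 2, 2, 2, -5, -2, 0, 2, 5, -2, -2, -2, 1, 2, -1] else
       if (r, i) = (1, 2) then [0, 0, 0, 0, 1, -2, -1, 2, 2, 2, -5, -2, 0, 2, 5, -2, -2, -2, 1, 2, -1] else
       []) else
     if (a, b, c) = (2, 2, 1) then (
       if (r, i) = (1, 2) then [0, 0, 0, 0, 1, -1, -3, 1, 4, 4, -3, -7, -2, 2, 7, 3, -4, -4, -1, 3, 1, -1] else
       if (r, i) = (1, 3) then [0, 0, 0, 0, 0, 0, 0, 1, -2, -1, 2, 2, 2, -5, -2, 0, 2, 5, -2, -2, -2, 1, 2, -1] else
       if (r, i) = (2, 2) then [0, 0, 0, 0, 0, 0, 1, -2, -1, 2, 2, 2, -5, -2, 0, 2, 5, -2, -2, -2, 1, 2, -1] else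
       if (r, i) = (2, 3) then [0, 0, 0, 0, 0, 0, 0, 0, 1, -2, -1, 2, 2, 2, -5, -2, 0, 2, 5, -2, -2, -2, 1, 2, -1] else
       []) else
     if (a, b, c) = (2, 2, 2) then (
       if (r, i) = (2, 2) then [0, 0, 0, 0, 0, 0, 1, -2, -1, 2, 2, 2, -5, -2, 0, 2, 5, -2, -2, -2, 1, 2, -1] else
       if (r, i) = (2, 3) then [0, 0, 0, 0, 0, 0, 0, 0, 1, -1, -2, -1, 3, 6, -1, -5, -7, 0, 7, 5, 1, -6, -3, 1, 2, 1, -1] else
       if (r, i) = (2, 4) then [0, 0, 0, 0, 0, 0, 0, 0, 0, 0, 0, 0, 1, -2, -1, 2, 2, 2, -5, -2, 0, 2, 5, -2, -2, -2, 1, 2, -1] else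
       []) else
     [])"

definition gf_cert :: "nat \<Rightarrow> nat \<Rightarrow> nat \<Rightarrow> nat \<Rightarrow> nat \<Rightarrow> int poly" where
  "gf_cert a b c r i =
     (if a \<le> 2 then Poly (cert_small (a, b, c, r, i))
      else poly (Poly2 (cert_large (b, c, r, i))) (qvar ^ (a - 3)))"

lemma gf_cert_0: "gf_cert 0 b c r i = 0"
  by (simp add: gf_cert_def cert_small_def)

lemma gf_cert_many_descents: "7 \<le> i \<Longrightarrow> gf_cert a b c r i = 0"
  by (simp add: gf_cert_def cert_small_def cert_large_def cong: if_cong)

text \<open>The recursion for a \<ge> 4, as an identity of polynomials in Y = q^(a-4): deleting a letter 0
  keeps the value of Y for a - 1, while any other letter requires the substitution Y := q Y.\<close>

definition large_prev :: "nat \<Rightarrow> nat \<Rightarrow> nat \<Rightarrow> nat \<Rightarrow> nat \<Rightarrow> int list list" where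
  "large_prev b c r r' j =
     (if r = 0 then cert_large (b, c, r', j)
      else coeffs2_dilate 0 (cert_large (remove_letter r 1 b, remove_letter r 2 c, r', j)))"

definition large_term :: "nat \<Rightarrow> nat \<Rightarrow> nat \<Rightarrow> nat \<Rightarrow> nat \<Rightarrow> int list list" where
  "large_term b c r i r' =
     (if r' < r then (if i = 0 then [] else map (coeffs_shift (b + c + 3)) ([] # large_prev b c r r' (i - 1)))
      else large_prev b c r r' i)"

definition large_rec :: "nat \<Rightarrow> nat \<Rightarrow> nat \<Rightarrow> nat \<Rightarrow> int list list" where
  "large_rec b c r i =
     (if \<not> c \<le> b \<or> content3 4 b c r = 0 then []
      else coeffs2_add (large_term b c r i 0) (coeffs2_add (large_term b c r i 1) (large_term b c r i 2)))"

lemma cert_large_rec: "list_all (\<lambda>(b, c, r, i).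
    strip2 (coeffs2_dilate 0 (cert_large (b, c, r, i))) = strip2 (large_rec b c r i))
  [(b, c, r, i). b \<leftarrow> [0..<4], c \<leftarrow> [0..<4], r \<leftarrow> [0..<3], i \<leftarrow> [0..<8]]"
  by code_simp

definition small_value :: "nat \<Rightarrow> nat \<Rightarrow> nat \<Rightarrow> nat \<Rightarrow> nat \<Rightarrow> int list" where
  "small_value a b c r i =
     (if a \<le> 2 then cert_small (a, b, c, r, i) else foldr coeffs_add (cert_large (b, c, r, i)) [])"

definition small_term :: "nat \<Rightarrow> nat \<Rightarrow> nat \<Rightarrow> nat \<Rightarrow> nat \<Rightarrow> nat \<Rightarrow> int list" where
  "small_term a b c r i r' =
     (let v = small_value (remove_letter r 0 a) (remove_letter r 1 b) (remove_letter r 2 c) r'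
      in if r' < r then (if i = 0 then [] else coeffs_shift (a + b + c - 1) (v (i - 1))) else v i)"

definition small_rec :: "nat \<Rightarrow> nat \<Rightarrow> nat \<Rightarrow> nat \<Rightarrow> nat \<Rightarrow> int list" where
  "small_rec a b c r i =
     (if \<not> (b \<le> a \<and> c \<le> b) \<or> content3 a b c r = 0 then []
      else if a + b + c = 1 then (if i = 0 then coeffs_mult (qpoch_coeffs 4) (qpoch_coeffs 3) else [])
      else coeffs_add (small_term a b c r i 0) (coeffs_add (small_term a b c r i 1) (small_term a b c r i 2)))"

lemma cert_small_rec: "list_all (\<lambda>(a, b, c, r, i).
    strip_while ((=) 0) (small_value a b c r i) = strip_while ((=) 0) (small_rec a b c r i))
  [(a, b, c, r, i). a \<leftarrow> [1, 2, 3], b \<leftarrow> [0..<4], c \<leftarrow> [0..<4], r \<leftarrow> [0..<3], i \<leftarrow> [0..<8]]"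
  by code_simp

lemma gf_cert_large:
  "4 \<le> a \<Longrightarrow> gf_cert a b c r i = poly (Poly2 (coeffs2_dilate 0 (cert_large (b, c, r, i)))) (qvar ^ (a - 4))"
  using poly_Poly2_coeffs2_dilate[of 0 "cert_large (b, c, r, i)" "qvar ^ (a - 4)"]
  by (simp add: gf_cert_def power_Suc[symmetric] Suc_diff_Suc numeral_eq_Suc)

lemma gf_cert_large_prev:
  assumes "4 \<le> a"
  shows "gf_cert (remove_letter r 0 a) (remove_letter r 1 b) (remove_letter r 2 c) r' j
       = poly (Poly2 (large_prev b c r r' j)) (qvar ^ (a - 4))"
proof (cases "r = 0")
  case True
  moreover have "\<not> a - 1 \<le> 2" "a - 1 - 3 = a - 4" using assms by simp_all
  ultimately show ?thesis by (simp add: gf_cert_def large_prev_def remove_letter_def)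
next
  case False
  then show ?thesis using assms gf_cert_large by (simp add: large_prev_def remove_letter_def)
qed

lemma gf_cert_large_term:
  assumes "4 \<le> a"
  shows "(if r' < r then (if i = 0 then 0 else qvar ^ (a + b + c - 1) *
            gf_cert (remove_letter r 0 a) (remove_letter r 1 b) (remove_letter r 2 c) r' (i - 1))
          else gf_cert (remove_letter r 0 a) (remove_letter r 1 b) (remove_letter r 2 c) r' i)
       = poly (Poly2 (large_term b c r i r')) (qvar ^ (a - 4))"
proof -
  have "a + b + c - 1 = (b + c + 3) + (a - 4)" using assms by simp
  then have "qvar ^ (a + b + c - 1) = qvar ^ (b + c + 3) * (qvar ^ (a - 4) :: int poly)"
    by (simp only: power_add)
  then show ?thesis
    unfolding large_term_def gf_cert_large_prev[OF assms]
    by (simp add: Poly2_map_coeffs_shift Poly2_Cons Poly_coeffs_shift algebra_simps)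
qed

lemma sum_lessThan_3: "(\<Sum>r<3. f r) = f 0 + (f 1 + f (2::nat))"
  by (simp add: eval_nat_numeral add.assoc)

lemma last_letter_rec_gf_cert_large:
  assumes "4 \<le> a" "b \<le> 3"
  shows "last_letter_rec (qpoch 4 * qpoch 3) gf_cert a b c r i = poly (Poly2 (large_rec b c r i)) (qvar ^ (a - 4))"
proof (cases "\<not> c \<le> b \<or> content3 4 b c r = 0")
  case True
  then have "\<not> (b \<le> a \<and> c \<le> b) \<or> content3 a b c r = 0" by (auto simp: content3_def)
  then show ?thesis using True by (simp add: last_letter_rec_def large_rec_def Poly2_def)
next
  case False
  then have "b \<le> a" "c \<le> b" "content3 a b c r \<noteq> 0" "a + b + c \<noteq> 1"
    using assms by (auto simp: content3_def)
  then have "last_letter_rec (qpoch 4 * qpoch 3) gf_cert a b c r i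
      = (\<Sum>r'<3. poly (Poly2 (large_term b c r i r')) (qvar ^ (a - 4)))"
    unfolding last_letter_rec_def gf_cert_large_term[OF assms(1), symmetric] by simp
  also have "\<dots> = poly (Poly2 (large_rec b c r i)) (qvar ^ (a - 4))"
    using False by (simp add: large_rec_def sum_lessThan_3 Poly2_coeffs2_add)
  finally show ?thesis .
qed

lemma gf_cert_small: "a \<le> 3 \<Longrightarrow> gf_cert a b c r i = Poly (small_value a b c r i)"
  by (cases "a = 3") (auto simp: gf_cert_def small_value_def poly_Poly2_one)

lemma last_letter_rec_gf_cert_small:
  assumes "a \<le> 3"
  shows "last_letter_rec (qpoch 4 * qpoch 3) gf_cert a b c r i = Poly (small_rec a b c r i)"
proof -
  have a': "remove_letter r 0 a \<le> 3" using assms by (auto simp: remove_letter_def)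
  show ?thesis
    unfolding last_letter_rec_def small_rec_def small_term_def Let_def gf_cert_small[OF a']
    by (simp add: sum_lessThan_3 Poly_coeffs_add Poly_coeffs_shift Poly_coeffs_mult Poly_qpoch_coeffs)
qed

lemma gf_cert_last_letter_rec:
  assumes "1 \<le> a" "b \<le> 3" "c \<le> 3" "r < 3"
  shows "gf_cert a b c r i = last_letter_rec (qpoch 4 * qpoch 3) gf_cert a b c r i"
proof -
  consider "8 \<le> i" | "i < 8" "a \<le> 3" | "i < 8" "4 \<le> a" by linarith
  then show ?thesis
  proof cases
    case 1
    then have z: "gf_cert a' b' c' r' i = 0" "gf_cert a' b' c' r' (i - 1) = 0" for a' b' c' r'
      by (simp_all add: gf_cert_many_descents)
    have "(\<Sum>r'<3. if r' < r then qvar ^ k * 0 else 0) = (0::int poly)" for k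
      by (simp add: sum.neutral)
    then show ?thesis unfolding last_letter_rec_def z using 1 by simp
  next
    case 2
    then have "(a, b, c, r, i) \<in> set [(a, b, c, r, i). a \<leftarrow> [1, 2, 3], b \<leftarrow> [0..<4], c \<leftarrow> [0..<4],
        r \<leftarrow> [0..<3], i \<leftarrow> [0..<8]]"
      using assms by (simp add: image_iff) linarith
    from bspec[OF cert_small_rec[unfolded list_all_iff] this]
    have "strip_while ((=) 0) (small_value a b c r i) = strip_while ((=) 0) (small_rec a b c r i)"
      by (simp only: prod.case)
    then have "Poly (small_value a b c r i) = Poly (small_rec a b c r i)"
      by (rule Poly_eq_if_strip_while_eq)
    then show ?thesis
      using 2 by (simp add: gf_cert_small last_letter_rec_gf_cert_small)
  next
    case 3
    then have "(b, c, r, i) \<in> set [(b, c, r, i). b \<leftarrow> [0..<4], c \<leftarrow> [0..<4], r \<leftarrow> [0..<3], i \<leftarrow> [0..<8]]"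
      using assms by (simp add: image_iff)
    from bspec[OF cert_large_rec[unfolded list_all_iff] this]
    have "strip2 (coeffs2_dilate 0 (cert_large (b, c, r, i))) = strip2 (large_rec b c r i)"
      by (simp only: prod.case)
    then have "Poly2 (coeffs2_dilate 0 (cert_large (b, c, r, i))) = Poly2 (large_rec b c r i)"
      by (rule Poly2_eq_if_strip2_eq)
    then show ?thesis
      using 3 assms by (simp add: gf_cert_large last_letter_rec_gf_cert_large)
  qed
qed

lemma qpoch_mult_yam_gf:
  "b \<le> 3 \<Longrightarrow> c \<le> 3 \<Longrightarrow> r < 3 \<Longrightarrow> qpoch 4 * qpoch 3 * yam_gf a b c r i = gf_cert a b c r i"
  by (rule eq_mult_yam_gf_if_last_letter_rec[where B = 3 and C = 3])
     (simp_all add: gf_cert_last_letter_rec gf_cert_0)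

definition cert_n33 :: "nat \<Rightarrow> int list list" where
  "cert_n33 i = coeffs2_add (cert_large (3, 3, 0, i)) (coeffs2_add (cert_large (3, 3, 1, i)) (cert_large (3, 3, 2, i)))"

lemma qpoch_mult_f_poly_n33:
  assumes "3 \<le> n"
  shows "qpoch 4 * qpoch 3 * f_poly [n, 3, 3] i = poly (Poly2 (cert_n33 i)) (qvar ^ (n - 3))"
proof -
  have "is_partition [n, 3, 3]" using assms by (simp add: is_partition_def)
  then show ?thesis
    using assms by (simp add: f_poly_three_rows sum_lessThan_3 distrib_left qpoch_mult_yam_gf
        gf_cert_def cert_n33_def Poly2_coeffs2_add)
qed

section \<open>The identities for the shape (n, 3, 3)\<close>

definition coeffs2_neg :: "int list list \<Rightarrow> int list list" where
  "coeffs2_neg xss = map (map uminus) xss"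

lemma Poly2_coeffs2_neg: "Poly2 (coeffs2_neg xss) = - Poly2 xss"
proof -
  have "Poly (map uminus xs) = - Poly xs" for xs :: "int list"
    by (induction xs) simp_all
  then show ?thesis by (induction xss) (simp_all add: coeffs2_neg_def Poly2_Cons)
qed

fun prod_one_minus_coeffs :: "nat \<Rightarrow> nat \<Rightarrow> int list" where
  "prod_one_minus_coeffs M 0 = [1]"
| "prod_one_minus_coeffs M (Suc N) = coeffs_mult (prod_one_minus_coeffs M N) (one_minus_coeffs (M - N))"

fun prod_one_minus_coeffs2 :: "nat \<Rightarrow> nat \<Rightarrow> int list list" where
  "prod_one_minus_coeffs2 s 0 = [[1]]"
| "prod_one_minus_coeffs2 s (Suc N) = coeffs2_mult (prod_one_minus_coeffs2 s N) [[1], coeffs_shift (s - N) [-1]]"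

lemma Poly_prod_one_minus_coeffs: "Poly (prod_one_minus_coeffs M N) = (\<Prod>t<N. 1 - qvar ^ (M - t))"
  by (induction N) (simp_all add: Poly_coeffs_mult Poly_one_minus_coeffs)

lemma poly_Poly2_prod_one_minus_coeffs2:
  "N \<le> Suc s \<Longrightarrow> poly (Poly2 (prod_one_minus_coeffs2 s N)) (qvar ^ m) = (\<Prod>t<N. 1 - qvar ^ (m + s - t))"
proof (induction N)
  case (Suc N)
  have "m + s - N = (s - N) + m" using Suc.prems by simp
  then have "1 - qvar ^ (m + s - N) = poly (Poly2 [[1], coeffs_shift (s - N) [-1]]) (qvar ^ m)"
    by (simp add: Poly2_Cons Poly_coeffs_shift power_add)
  then show ?case using Suc by (simp add: Poly2_coeffs2_mult)
qed (simp add: Poly2_Cons)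

lemma qbinom_mult_qpoch_coeffs2:
  "N \<le> Suc s \<Longrightarrow> qbinom (int (m + s)) (int N) * qpoch N = poly (Poly2 (prod_one_minus_coeffs2 s N)) (qvar ^ m)"
  by (subst qbinom_mult_qpoch) (simp add: poly_Poly2_prod_one_minus_coeffs2)

lemma qbinom_mult_qpoch_coeffs:
  "qbinom (int M) (int N) * qpoch N = poly (Poly2 [prod_one_minus_coeffs M N]) Y"
  by (simp add: qbinom_mult_qpoch Poly2_Cons Poly_prod_one_minus_coeffs)

definition binom_term_coeffs2 :: "nat \<Rightarrow> nat \<Rightarrow> nat \<Rightarrow> int list list \<Rightarrow> int list list \<Rightarrow> int list list" where
  "binom_term_coeffs2 k N1 N2 P1 P2 =
     coeffs2_mult [coeffs_shift k (coeffs_mult (prod_one_minus_coeffs 4 (4 - N1)) (prod_one_minus_coeffs 3 (3 - N2)))]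
       (coeffs2_mult P1 P2)"

lemma qpoch_mult_binom_term:
  assumes "N1 \<le> 4" "N2 \<le> 3"
    and X1: "X1 * qpoch N1 = poly (Poly2 P1) Y" and X2: "X2 * qpoch N2 = poly (Poly2 P2) Y"
  shows "qpoch 4 * qpoch 3 * (qvar ^ k * X1 * X2) = poly (Poly2 (binom_term_coeffs2 k N1 N2 P1 P2)) Y"
proof -
  define A where "A = (\<Prod>t<4 - N1. 1 - qvar ^ (4 - t))"
  define B where "B = (\<Prod>t<3 - N2. 1 - qvar ^ (3 - t))"
  have "qpoch 4 = qpoch N1 * A" "qpoch 3 = qpoch N2 * B"
    using qpoch_eq_mult_prod[of "4 - N1" 4] qpoch_eq_mult_prod[of "3 - N2" 3] assms(1,2)
    by (simp_all add: A_def B_def)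
  then have "qpoch 4 * qpoch 3 * (qvar ^ k * X1 * X2) = qvar ^ k * A * B * (X1 * qpoch N1) * (X2 * qpoch N2)"
    by (simp add: mult_ac)
  also have "\<dots> = poly (Poly2 (binom_term_coeffs2 k N1 N2 P1 P2)) Y"
    unfolding X1 X2 A_def B_def binom_term_coeffs2_def Poly2_coeffs2_mult
    by (simp add: Poly2_Cons Poly_coeffs_shift Poly_coeffs_mult Poly_prod_one_minus_coeffs mult_ac)
  finally show ?thesis .
qed

lemma mult_add_eq_poly_Poly2:
  "D * A = poly (Poly2 P) Y \<Longrightarrow> D * B = poly (Poly2 Q) Y \<Longrightarrow> D * (A + B) = poly (Poly2 (coeffs2_add P Q)) Y"
  by (simp add: distrib_left Poly2_coeffs2_add)

lemma mult_diff_eq_poly_Poly2: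
  "D * A = poly (Poly2 P) Y \<Longrightarrow> D * B = poly (Poly2 Q) Y \<Longrightarrow>
     D * (A - B) = poly (Poly2 (coeffs2_add P (coeffs2_neg Q))) Y"
  by (simp add: right_diff_distrib Poly2_coeffs2_add Poly2_coeffs2_neg)

lemma qpoch_mult_f_poly_n33_eqI:
  assumes "3 \<le> n" "qpoch 4 * qpoch 3 * R = poly (Poly2 P) (qvar ^ (n - 3))" "strip2 (cert_n33 i) = strip2 P"
  shows "f_poly [n, 3, 3] i = R"
proof -
  have "qpoch 4 * qpoch 3 * f_poly [n, 3, 3] i = qpoch 4 * qpoch 3 * R"
    using qpoch_mult_f_poly_n33[OF assms(1)] assms(2) Poly2_eq_if_strip2_eq[OF assms(3)] by simp
  then show ?thesis using qpoch_nonzero by simp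
qed

text \<open>In each of the following identities, q^9 [n-1, 2] is rewritten as q^9 [m+2, 2] * 1 etc. with
  m = n - 3, so that both sides become polynomials in Y = q^m whose coefficients are compared.\<close>

lemma f_poly_n33_2:
  assumes "3 \<le> n"
  shows "f_poly [n, 3, 3] 2 = qvar ^ 9 * qbinom (int n - 1) 2"
proof (rule qpoch_mult_f_poly_n33_eqI[OF assms])
  let ?P = "binom_term_coeffs2 9 2 0 (prod_one_minus_coeffs2 2 2) [[1]]"
  have "qvar ^ 9 * qbinom (int n - 1) 2 = qvar ^ 9 * qbinom (int (n - 3 + 2)) (int 2) * 1"
    using assms by simp
  then show "qpoch 4 * qpoch 3 * (qvar ^ 9 * qbinom (int n - 1) 2) = poly (Poly2 ?P) (qvar ^ (n - 3))"
    by (simp only:) (intro qpoch_mult_binom_term qbinom_mult_qpoch_coeffs2; simp add: Poly2_Cons)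
  show "strip2 (cert_n33 2) = strip2 ?P"
    by code_simp
qed

lemma f_poly_n33_3:
  assumes "3 \<le> n"
  shows "f_poly [n, 3, 3] 3 = qvar ^ 11 * qbinom (int n - 1) 2 * qbinom (int n + 3) 1
                            + qvar ^ 12 * qbinom (int n) 3 * qbinom 4 1"
proof (rule qpoch_mult_f_poly_n33_eqI[OF assms])
  let ?P = "coeffs2_add (binom_term_coeffs2 11 2 1 (prod_one_minus_coeffs2 2 2) (prod_one_minus_coeffs2 6 1))
                        (binom_term_coeffs2 12 3 1 (prod_one_minus_coeffs2 3 3) [prod_one_minus_coeffs 4 1])"
  have "qbinom (int n - 1) 2 = qbinom (int (n - 3 + 2)) (int 2)" "qbinom (int n + 3) 1 = qbinom (int (n - 3 + 6)) (int 1)"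
    "qbinom (int n) 3 = qbinom (int (n - 3 + 3)) (int 3)" "qbinom 4 1 = qbinom (int 4) (int 1)"
    using assms by (simp_all add: add.commute)
  then show "qpoch 4 * qpoch 3 * (qvar ^ 11 * qbinom (int n - 1) 2 * qbinom (int n + 3) 1
      + qvar ^ 12 * qbinom (int n) 3 * qbinom 4 1) = poly (Poly2 ?P) (qvar ^ (n - 3))"
    by (simp only:) (intro mult_add_eq_poly_Poly2 qpoch_mult_binom_term qbinom_mult_qpoch_coeffs2
        qbinom_mult_qpoch_coeffs; simp)
  show "strip2 (cert_n33 3) = strip2 ?P"
    by code_simp
qed

lemma f_poly_n33_4:
  assumes "3 \<le> n"
  shows "f_poly [n, 3, 3] 4 = qvar ^ 15 * qbinom (int n - 1) 2 * qbinom (int n + 2) 2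
                            + qvar ^ 15 * qbinom (int n + 1) 4 * qbinom 5 2"
proof (rule qpoch_mult_f_poly_n33_eqI[OF assms])
  let ?P = "coeffs2_add (binom_term_coeffs2 15 2 2 (prod_one_minus_coeffs2 2 2) (prod_one_minus_coeffs2 5 2))
                        (binom_term_coeffs2 15 4 2 (prod_one_minus_coeffs2 4 4) [prod_one_minus_coeffs 5 2])"
  have "qbinom (int n - 1) 2 = qbinom (int (n - 3 + 2)) (int 2)" "qbinom (int n + 2) 2 = qbinom (int (n - 3 + 5)) (int 2)"
    "qbinom (int n + 1) 4 = qbinom (int (n - 3 + 4)) (int 4)" "qbinom 5 2 = qbinom (int 5) (int 2)"
    using assms by (simp_all add: add.commute)
  then show "qpoch 4 * qpoch 3 * (qvar ^ 15 * qbinom (int n - 1) 2 * qbinom (int n + 2) 2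
      + qvar ^ 15 * qbinom (int n + 1) 4 * qbinom 5 2) = poly (Poly2 ?P) (qvar ^ (n - 3))"
    by (simp only:) (intro mult_add_eq_poly_Poly2 qpoch_mult_binom_term qbinom_mult_qpoch_coeffs2
        qbinom_mult_qpoch_coeffs; simp)
  show "strip2 (cert_n33 4) = strip2 ?P"
    by code_simp
qed

lemma f_poly_n33_5:
  assumes "3 \<le> n"
  shows "f_poly [n, 3, 3] 5 = qvar ^ 21 * qbinom (int n - 1) 2 * qbinom (int n + 1) 3
                            + qvar ^ 20 * qbinom (int n + 1) 4 * qbinom (int n + 3) 1"
proof (rule qpoch_mult_f_poly_n33_eqI[OF assms])
  let ?P = "coeffs2_add (binom_term_coeffs2 21 2 3 (prod_one_minus_coeffs2 2 2) (prod_one_minus_coeffs2 4 3))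
                        (binom_term_coeffs2 20 4 1 (prod_one_minus_coeffs2 4 4) (prod_one_minus_coeffs2 6 1))"
  have "qbinom (int n - 1) 2 = qbinom (int (n - 3 + 2)) (int 2)" "qbinom (int n + 1) 3 = qbinom (int (n - 3 + 4)) (int 3)"
    "qbinom (int n + 1) 4 = qbinom (int (n - 3 + 4)) (int 4)" "qbinom (int n + 3) 1 = qbinom (int (n - 3 + 6)) (int 1)"
    using assms by (simp_all add: add.commute)
  then show "qpoch 4 * qpoch 3 * (qvar ^ 21 * qbinom (int n - 1) 2 * qbinom (int n + 1) 3
      + qvar ^ 20 * qbinom (int n + 1) 4 * qbinom (int n + 3) 1) = poly (Poly2 ?P) (qvar ^ (n - 3))"
    by (simp only:) (intro mult_add_eq_poly_Poly2 qpoch_mult_binom_term qbinom_mult_qpoch_coeffs2; simp)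
  show "strip2 (cert_n33 5) = strip2 ?P"
    by code_simp
qed

lemma f_poly_n33_6:
  assumes "3 \<le> n"
  shows "f_poly [n, 3, 3] 6 = qvar ^ 27 * qbinom (int n) 3 ^ 2 - qvar ^ 28 * qbinom (int n) 4 * qbinom (int n) 2"
proof (rule qpoch_mult_f_poly_n33_eqI[OF assms])
  let ?P = "coeffs2_add (binom_term_coeffs2 27 3 3 (prod_one_minus_coeffs2 3 3) (prod_one_minus_coeffs2 3 3))
              (coeffs2_neg (binom_term_coeffs2 28 4 2 (prod_one_minus_coeffs2 3 4) (prod_one_minus_coeffs2 3 2)))"
  have "qvar ^ 27 * qbinom (int n) 3 ^ 2 = qvar ^ 27 * qbinom (int (n - 3 + 3)) (int 3) * qbinom (int (n - 3 + 3)) (int 3)"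
    "qbinom (int n) 4 = qbinom (int (n - 3 + 3)) (int 4)" "qbinom (int n) 2 = qbinom (int (n - 3 + 3)) (int 2)"
    using assms by (simp_all add: power2_eq_square mult.assoc)
  then show "qpoch 4 * qpoch 3 * (qvar ^ 27 * qbinom (int n) 3 ^ 2 - qvar ^ 28 * qbinom (int n) 4 * qbinom (int n) 2)
      = poly (Poly2 ?P) (qvar ^ (n - 3))"
    by (simp only:) (intro mult_diff_eq_poly_Poly2 qpoch_mult_binom_term qbinom_mult_qpoch_coeffs2; simp)
  show "strip2 (cert_n33 6) = strip2 ?P"
    by code_simp
qed

lemma qbinom_n33_quotient:
  assumes "3 \<le> n"
  shows "qvar ^ 27 * qbinom (int n) 3 ^ 2 - qvar ^ 28 * qbinom (int n) 4 * qbinom (int n) 2 =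
    qvar ^ 27 * (((1 - qvar ^ (n - 2)) * (1 - qvar ^ (n - 1)) ^ 2 * (1 - qvar ^ n) ^ 2 * (1 - qvar ^ (n + 1)))
      div ((1 - qvar) * (1 - qvar ^ 2) ^ 2 * (1 - qvar ^ 3) ^ 2 * (1 - qvar ^ 4)))"
    (is "_ = qvar ^ 27 * (?A div ?B)")
proof -
  define x where "x = qvar ^ (n - 3)"
  define G where "G = qbinom (int n) 3 ^ 2 - qvar * qbinom (int n) 4 * qbinom (int n) 2"
  have pow: "qvar ^ (n - k) = qvar ^ (3 - k) * x" if "k \<le> 3" for k
    using that assms by (simp add: x_def power_add[symmetric])
  have qp: "qpoch 2 = (1 - qvar) * (1 - qvar ^ 2)" "qpoch 3 = qpoch 2 * (1 - qvar ^ 3)" "qpoch 4 = qpoch 3 * (1 - qvar ^ 4)"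
    by (simp_all add: qpoch_Suc numeral_eq_Suc)
  have b2: "qbinom (int n) 2 * qpoch 2 = (1 - qvar ^ 3 * x) * (1 - qvar ^ 2 * x)"
    and b3: "qbinom (int n) 3 * qpoch 3 = (1 - qvar ^ 3 * x) * (1 - qvar ^ 2 * x) * (1 - qvar * x)"
    and b4: "qbinom (int n) 4 * qpoch 4 = (1 - qvar ^ 3 * x) * (1 - qvar ^ 2 * x) * (1 - qvar * x) * (1 - x)"
    using qbinom_mult_qpoch[of n 2] qbinom_mult_qpoch[of n 3] qbinom_mult_qpoch[of n 4] pow[of 0] pow[of 1] pow[of 2]
      pow[of 3] by (simp_all add: numeral_eq_Suc)
  have "qvar ^ (n + 1) = qvar ^ 4 * x"
    using assms by (simp add: x_def power_add[symmetric])
  then have A: "?A = (1 - qvar * x) * (1 - qvar ^ 2 * x) ^ 2 * (1 - qvar ^ 3 * x) ^ 2 * (1 - qvar ^ 4 * x)"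
    using pow[of 0] pow[of 1] pow[of 2] by simp
  have "(1 - qvar) * (?B * G) = (1 - qvar ^ 4) * (qbinom (int n) 3 * qpoch 3) ^ 2
      - qvar * (1 - qvar ^ 3) * (qbinom (int n) 4 * qpoch 4) * (qbinom (int n) 2 * qpoch 2)"
    unfolding G_def qp by algebra
  also have "\<dots> = (1 - qvar) * ?A"
    unfolding b2 b3 b4 A by algebra
  finally have "?B * G = ?A"
    using one_minus_qvar_power_nonzero[of 1] by simp
  moreover have "?B \<noteq> 0"
    using one_minus_qvar_power_nonzero[of 1] one_minus_qvar_power_nonzero[of 2]
      one_minus_qvar_power_nonzero[of 3] one_minus_qvar_power_nonzero[of 4] by simp
  ultimately have "?A div ?B = G" by (metis nonzero_mult_div_cancel_left)
  moreover have "qvar ^ 27 * qbinom (int n) 3 ^ 2 - qvar ^ 28 * qbinom (int n) 4 * qbinom (int n) 2 = qvar ^ 27 * G"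
    unfolding G_def by algebra
  ultimately show ?thesis by (simp only:)
qed

theorem theoremN33:
  fixes n :: nat
  assumes "n \<ge> 3"
  shows
   "(f_poly [n, 3, 3] 2 = qvar ^ 9 * qbinom (int n - 1) 2) \<and>
   (f_poly [n, 3, 3] 3 = qvar ^ 11 * qbinom (int n - 1) 2 * qbinom (int n + 3) 1
                        + qvar ^ 12 * qbinom (int n) 3 * qbinom 4 1) \<and>
   (f_poly [n, 3, 3] 4 = qvar ^ 15 * qbinom (int n - 1) 2 * qbinom (int n + 2) 2
                        + qvar ^ 15 * qbinom (int n + 1) 4 * qbinom 5 2) \<and>
   (f_poly [n, 3, 3] 5 = qvar ^ 21 * qbinom (int n - 1) 2 * qbinom (int n + 1) 3
                        + qvar ^ 20 * qbinom (int n + 1) 4 * qbinom (int n + 3) 1) \<and>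
   (f_poly [n, 3, 3] 6 = qvar ^ 27 *
       (((1 - qvar ^ (n - 2)) * (1 - qvar ^ (n - 1)) ^ 2 * (1 - qvar ^ n) ^ 2 * (1 - qvar ^ (n + 1)))
        div ((1 - qvar) * (1 - qvar ^ 2) ^ 2 * (1 - qvar ^ 3) ^ 2 * (1 - qvar ^ 4)))) \<and>
   (f_poly [n, 3, 3] 6 = qvar ^ 27 * qbinom (int n) 3 ^ 2
                        - qvar ^ 28 * qbinom (int n) 4 * qbinom (int n) 2)"
  using f_poly_n33_2[OF assms] f_poly_n33_3[OF assms] f_poly_n33_4[OF assms] f_poly_n33_5[OF assms]
    f_poly_n33_6[OF assms] qbinom_n33_quotient[OF assms]
  by (simp only:)

end
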